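(* Let $W$ be a finite-dimensional real vector space with a Lorentzian inner product and let $W=W_1\oplus W_2$ be an orthogonal direct sum with $W_1$ time-like; write $u=u^T+u^\perp$ accordingly. Let $V,\tilde V$ be space-like subspaces of $W$ of the same dimension $m$. If there is a linear isometry $T\colon W\to W$ preserving $W_1$ and $W_2$ with $T(V)=\tilde V$, then for any orthonormal bases $\{\xi_1,\dots,\xi_m\}$ of $V$ and $\{\tilde\xi_1,\dots,\tilde\xi_m\}$ of $\tilde V$ the Gram matrices $(\langle\xi_i^T,\xi_j^T\rangle)$ and $(\langle\tilde\xi_i^T,\tilde\xi_j^T\rangle)$ (equivalently $(\langle\xi_i^\perp,\xi_j^\perp\rangle)$ and $(\langle\tilde\xi_i^\perp,\tilde\xi_j^\perp\rangle)$) have the same eigenvalues counted with multiplicities. Conversely, if there exist orthonormal bases $\{\xi_i\}$ of $V$ and $\{\tilde\xi_i\}$ of $\tilde V$ such that (i) the subspaces spanned by $\{\xi_1^T,\dots,\xi_m^T\}$ and by $\{\tilde\xi_1^T,\dots,\tilde\xi_m^T\}$ are either both degenerate of dimension $m$ or both nondegenerate, and (ii) the Gram matrices $(\langle\xi_i^T,\xi_j^T\rangle)$ and $(\langle\tilde\xi_i^T,\tilde\xi_j^T\rangle)$ (equivalently the $\perp$-ones) have the same eigenvalues counted with multiplicities, then there is a linear isometry $T\colon W\to W$ preserving $W_1$ and $W_2$ with $T(V)=\tilde V$. *)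

theory Defs
  imports "HOL-Analysis.Analysis" "Jordan_Normal_Form.Char_Poly"
begin

text \<open>Index 1: there is a time-like vector, and every subspace on which the form is
  negative definite has dimension at most 1.\<close>
definition lorentzian :: "('a::euclidean_space \<Rightarrow> 'a \<Rightarrow> real) \<Rightarrow> bool" where
  "lorentzian g \<longleftrightarrow> bilinear g \<and> (\<forall>x y. g x y = g y x)
     \<and> (\<forall>x. (\<forall>y. g x y = 0) \<longrightarrow> x = 0)
     \<and> (\<exists>e. g e e < 0)
     \<and> (\<forall>S. subspace S \<and> (\<forall>x\<in>S. x \<noteq> 0 \<longrightarrow> g x x < 0) \<longrightarrow> dim S \<le> 1)"

definition orth_direct_sum :: "('a::euclidean_space \<Rightarrow> 'a \<Rightarrow> real) \<Rightarrow> 'a set \<Rightarrow> 'a set \<Rightarrow> bool" where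
  "orth_direct_sum g W1 W2 \<longleftrightarrow> subspace W1 \<and> subspace W2 \<and> W1 \<inter> W2 = {0}
     \<and> (\<forall>u. \<exists>a\<in>W1. \<exists>b\<in>W2. u = a + b)
     \<and> (\<forall>a\<in>W1. \<forall>b\<in>W2. g a b = 0)"

definition timelike_subspace :: "('a::real_vector \<Rightarrow> 'a \<Rightarrow> real) \<Rightarrow> 'a set \<Rightarrow> bool" where
  "timelike_subspace g S \<longleftrightarrow> subspace S \<and> (\<exists>v\<in>S. g v v < 0)"

definition spacelike_subspace :: "('a::real_vector \<Rightarrow> 'a \<Rightarrow> real) \<Rightarrow> 'a set \<Rightarrow> bool" where
  "spacelike_subspace g S \<longleftrightarrow> subspace S \<and> (\<forall>v\<in>S. v \<noteq> 0 \<longrightarrow> g v v > 0)"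

definition degenerate_subspace :: "('a::real_vector \<Rightarrow> 'a \<Rightarrow> real) \<Rightarrow> 'a set \<Rightarrow> bool" where
  "degenerate_subspace g S \<longleftrightarrow> (\<exists>x\<in>S. x \<noteq> 0 \<and> (\<forall>y\<in>S. g x y = 0))"

definition proj1 :: "'a::real_vector set \<Rightarrow> 'a set \<Rightarrow> 'a \<Rightarrow> 'a" where
  "proj1 W1 W2 u = (THE a. a \<in> W1 \<and> u - a \<in> W2)"

definition proj2 :: "'a::real_vector set \<Rightarrow> 'a set \<Rightarrow> 'a \<Rightarrow> 'a" where
  "proj2 W1 W2 u = (THE b. b \<in> W2 \<and> u - b \<in> W1)"

definition adapted_isometry :: "('a::real_vector \<Rightarrow> 'a \<Rightarrow> real) \<Rightarrow> 'a set \<Rightarrow> 'a set \<Rightarrow> ('a \<Rightarrow> 'a) \<Rightarrow> bool" where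
  "adapted_isometry g W1 W2 T \<longleftrightarrow> linear T \<and> (\<forall>x y. g (T x) (T y) = g x y)
     \<and> T ` W1 = W1 \<and> T ` W2 = W2"

definition orthonormal_basis :: "('a::real_vector \<Rightarrow> 'a \<Rightarrow> real) \<Rightarrow> 'a set \<Rightarrow> nat \<Rightarrow> (nat \<Rightarrow> 'a) \<Rightarrow> bool" where
  "orthonormal_basis g V m xi \<longleftrightarrow> (\<forall>i<m. xi i \<in> V)
     \<and> (\<forall>i<m. \<forall>j<m. g (xi i) (xi j) = (if i = j then 1 else 0))
     \<and> span (xi ` {..<m}) = V"

definition gram :: "('a \<Rightarrow> 'a \<Rightarrow> real) \<Rightarrow> nat \<Rightarrow> (nat \<Rightarrow> 'a) \<Rightarrow> real mat" where
  "gram g m f = mat m m (\<lambda>(i, j). g (f i) (f j))"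

definition eigen_mult :: "real mat \<Rightarrow> real \<Rightarrow> nat" where
  "eigen_mult A lam = order lam (char_poly A)"

definition same_eigenvalues :: "real mat \<Rightarrow> real mat \<Rightarrow> bool" where
  "same_eigenvalues A B \<longleftrightarrow> (\<forall>lam. eigen_mult A lam = eigen_mult B lam)"

end

theory Submission
  imports Defs
begin

(* An adapted isometry T commutes with the two projections, so it maps the projected
   vectors of an orthonormal basis of V to those of the orthonormal basis T(xi) of V'; and the
   Gram matrices of a fixed bilinear form in two orthonormal bases of the same space are
   conjugate by an orthogonal matrix, hence have the same characteristic polynomial.

   Conversely, diagonalize (u, v) |-> <u^T, v^T> simultaneously with the positive definite form
   on V and on V'. Equal eigenvalues allow the two diagonalizing bases eta, eta' to be ordered so
   that their diagonal entries d_i agree; then the W1-components of eta and eta' are orthogonal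
   families with norms d_i, and their W2-components orthogonal families with norms 1 - d_i.
   A Witt-type extension argument, which needs the index of the ambient nondegenerate space,
   yields isometries of W1 and of W2 matching these families: null members vanish in the
   nondegenerate case and in the definite space W2, while in the degenerate case the Lorentzian
   signature leaves a single null member, which is completed to a hyperbolic pair. The sum of the
   two isometries is the required adapted isometry. *)

lemma exists_quadratic_positive:
  fixes a b :: real
  assumes "a \<noteq> 0"
  shows "\<exists>t. 2 * t * a + t\<^sup>2 * b > 0"
proof -
  define t where "t = a / (\<bar>b\<bar> + 1)"
  have "t \<noteq> 0"
    using assms by (simp add: t_def add_pos_nonneg)
  then have "t\<^sup>2 * \<bar>b\<bar> < t\<^sup>2 * (\<bar>b\<bar> + 1)"
    by simp
  also have "\<dots> = t * a"
    by (simp add: t_def power2_eq_square)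
  finally have "t\<^sup>2 * \<bar>b\<bar> < t * a" .
  moreover have "- (t\<^sup>2 * \<bar>b\<bar>) \<le> t\<^sup>2 * b"
    using mult_left_mono[of "- \<bar>b\<bar>" b "t\<^sup>2"] by simp
  moreover have "0 \<le> t\<^sup>2 * \<bar>b\<bar>"
    by simp
  ultimately show ?thesis
    by (intro exI[of _ t]) linarith
qed

lemma sqrt_abs_normalize:
  fixes a :: real
  shows "1 / sqrt \<bar>a\<bar> * (1 / sqrt \<bar>a\<bar> * a) = sgn a"
proof -
  have "sqrt \<bar>a\<bar> * sqrt \<bar>a\<bar> = \<bar>a\<bar>"
    by simp
  then have "1 / sqrt \<bar>a\<bar> * (1 / sqrt \<bar>a\<bar>) = 1 / \<bar>a\<bar>"
    by (metis times_divide_times_eq mult_1)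
  then show ?thesis
    by (simp add: real_sgn_eq flip: mult.assoc)
qed

lemma bij_betw_preserving_fibres:
  assumes "finite X" "finite Y"
    and fibres: "\<And>c. card {x\<in>X. f x = c} = card {y\<in>Y. f' y = c}"
  shows "\<exists>\<sigma>. bij_betw \<sigma> X Y \<and> (\<forall>x\<in>X. f' (\<sigma> x) = f x)"
proof -
  have "\<forall>c. \<exists>\<phi>. bij_betw \<phi> {x\<in>X. f x = c} {y\<in>Y. f' y = c}"
    by (intro allI finite_same_card_bij) (use assms in auto)
  from choice[OF this] obtain F where F: "\<And>c. bij_betw (F c) {x\<in>X. f x = c} {y\<in>Y. f' y = c}"
    by blast
  define \<sigma> where "\<sigma> x = F (f x) x" for x
  have \<sigma>: "\<sigma> x \<in> Y \<and> f' (\<sigma> x) = f x" if "x \<in> X" for x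
    using bij_betwE[OF F[of "f x"]] that unfolding \<sigma>_def by auto
  have "inj_on \<sigma> X"
  proof (rule inj_onI)
    fix x y assume xy: "x \<in> X" "y \<in> X" "\<sigma> x = \<sigma> y"
    then have "f x = f y"
      using \<sigma> by metis
    then show "x = y"
      using xy bij_betw_imp_inj_on[OF F[of "f x"]] unfolding \<sigma>_def by (auto dest: inj_onD)
  qed
  moreover have "\<sigma> ` X = Y"
  proof (rule subset_antisym)
    show "\<sigma> ` X \<subseteq> Y"
      using \<sigma> by auto
    show "Y \<subseteq> \<sigma> ` X"
    proof
      fix y assume "y \<in> Y"
      then have "y \<in> F (f' y) ` {x\<in>X. f x = f' y}"
        using bij_betw_imp_surj_on[OF F[of "f' y"]] by auto
      then obtain x where "x \<in> X" "f x = f' y" "y = F (f' y) x"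
        by auto
      then have "\<sigma> x = y"
        unfolding \<sigma>_def by simp
      then show "y \<in> \<sigma> ` X"
        using \<open>x \<in> X\<close> by blast
    qed
  qed
  ultimately show ?thesis
    using \<sigma> unfolding bij_betw_def by blast
qed

lemma card_fibre_Un:
  assumes "finite X" "finite Y" "X \<inter> Y = {}"
  shows "card {x\<in>X \<union> Y. f x = c} = card {x\<in>X. f x = c} + card {x\<in>Y. f x = c}"
proof -
  have "{x\<in>X \<union> Y. f x = c} = {x\<in>X. f x = c} \<union> {x\<in>Y. f x = c}"
    by auto
  then show ?thesis
    using assms by (simp add: card_Un_disjoint disjoint_iff)
qed

lemma bilinear_sum_left:
  assumes "bilinear h"
  shows "h (\<Sum>i\<in>I. f i) y = (\<Sum>i\<in>I. h (f i) y)"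
proof -
  have "linear (\<lambda>x. h x y)"
    using assms by (simp add: bilinear_def)
  from linear_sum[OF this] show ?thesis
    by (simp add: o_def)
qed

lemma bilinear_sum_right:
  assumes "bilinear h"
  shows "h y (\<Sum>i\<in>I. f i) = (\<Sum>i\<in>I. h y (f i))"
proof -
  have "linear (\<lambda>x. h y x)"
    using assms by (simp add: bilinear_def)
  from linear_sum[OF this] show ?thesis
    by (simp add: o_def)
qed

lemma bilinear_scale_left: "bilinear h \<Longrightarrow> h (c *\<^sub>R x) y = c * h x y"
  and bilinear_scale_right: "bilinear h \<Longrightarrow> h x (c *\<^sub>R y) = c * h x y"
  for h :: "'a::real_vector \<Rightarrow> 'b::real_vector \<Rightarrow> real"
  by (simp_all add: bilinear_lmul bilinear_rmul)

lemma bilinear_compose_linear: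
  assumes "bilinear g" "linear P" "linear Q"
  shows "bilinear (\<lambda>x y. g (P x) (Q y))"
  using assms unfolding bilinear_def by (auto intro: linear_compose[unfolded o_def])

lemma independent_of_dim_span:
  fixes a :: "nat \<Rightarrow> 'a::euclidean_space"
  assumes "dim (span (a ` {..<m})) = m"
  shows "inj_on a {..<m}" "independent (a ` {..<m})"
proof -
  have "dim (span (a ` {..<m})) \<le> card (a ` {..<m})"
    by (rule dim_le_card[OF order_refl]) simp
  then have card: "card (a ` {..<m}) = m"
    using assms card_image_le[of "{..<m}" a] by simp
  then show "inj_on a {..<m}"
    by (intro eq_card_imp_inj_on) auto
  have "independent (a ` {..<m}) = (span (a ` {..<m}) \<subseteq> span (a ` {..<m}))"
    by (rule card_eq_dim[OF span_superset]) (use card assms in simp_all)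
  then show "independent (a ` {..<m})"
    by simp
qed

lemma order_prod_linear_factors:
  "order c (\<Prod>i\<leftarrow>xs. [:- d i, 1:]) = length (filter (\<lambda>i. d i = c) xs)"
proof (induction xs)
  case Nil
  then show ?case
    by (simp add: order_0I)
next
  case (Cons x xs)
  have "(\<Prod>i\<leftarrow>xs. [:- d i, 1:]) \<noteq> 0"
    by (auto simp: prod_list_zero_iff)
  then have "[:- d x, 1:] * (\<Prod>i\<leftarrow>xs. [:- d i, 1:]) \<noteq> 0"
    by (metis mult_eq_0_iff pCons_eq_0_iff one_neq_zero)
  then have "order c ([:- d x, 1:] * (\<Prod>i\<leftarrow>xs. [:- d i, 1:]))
      = order c [:- d x, 1:] + order c (\<Prod>i\<leftarrow>xs. [:- d i, 1:])"
    by (rule order_mult)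
  then show ?case
    using Cons by (simp add: order_linear')
qed

lemma eigen_mult_diagonal:
  "eigen_mult (mat m m (\<lambda>(i, j). if i = j then d i else 0)) c = card {i. i < m \<and> d i = c}"
proof -
  let ?M = "mat m m (\<lambda>(i, j). if i = j then d i else 0) :: real mat"
  have "upper_triangular ?M"
    unfolding upper_triangular_def by auto
  moreover have "diag_mat ?M = map d [0..<m]"
    unfolding diag_mat_def by auto
  ultimately have "char_poly ?M = (\<Prod>i\<leftarrow>[0..<m]. [:- d i, 1:])"
    using char_poly_upper_triangular[of ?M m] by (simp add: o_def)
  then have "eigen_mult ?M c = length (filter (\<lambda>i. d i = c) [0..<m])"
    unfolding eigen_mult_def by (simp add: order_prod_linear_factors)
  also have "\<dots> = card {i. i < m \<and> d ([0..<m] ! i) = c}"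
    by (simp add: length_filter_conv_card)
  also have "{i. i < m \<and> d ([0..<m] ! i) = c} = {i. i < m \<and> d i = c}"
    by auto
  finally show ?thesis .
qed

lemma orthonormal_basis_inj:
  assumes "orthonormal_basis g V m xi"
  shows "inj_on xi {..<m}"
proof (rule inj_onI)
  fix i j assume "i \<in> {..<m}" "j \<in> {..<m}" "xi i = xi j"
  then show "i = j"
    using assms unfolding orthonormal_basis_def by (metis lessThan_iff zero_neq_one)
qed

lemma orthonormal_basis_image:
  assumes "orthonormal_basis g V m xi" "linear T" "\<forall>x y. g (T x) (T y) = g x y"
  shows "orthonormal_basis g (T ` V) m (\<lambda>i. T (xi i))"
  using assms linear_span_image[OF assms(2), of "xi ` {..<m}"]
  unfolding orthonormal_basis_def by (auto simp: image_image)

lemma orthonormal_basis_permute: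
  assumes "orthonormal_basis g V m xi" "bij_betw \<sigma> {..<m} {..<m}"
  shows "orthonormal_basis g V m (\<lambda>i. xi (\<sigma> i))"
proof -
  have "(\<lambda>i. xi (\<sigma> i)) ` {..<m} = xi ` {..<m}"
    using bij_betw_imp_surj_on[OF assms(2)] by (metis image_image)
  then show ?thesis
    using assms bij_betwE[OF assms(2)] unfolding orthonormal_basis_def
    by (auto dest: bij_betw_imp_inj_on inj_onD)
qed

lemma span_image_orthonormal_basis:
  assumes "orthonormal_basis g V m xi" "linear P"
  shows "span ((\<lambda>i. P (xi i)) ` {..<m}) = P ` V"
  using assms linear_span_image[OF assms(2), of "xi ` {..<m}"]
  unfolding orthonormal_basis_def by (simp add: image_image)

lemma image_eq_of_orthonormal_basis_map:
  assumes "linear T" "orthonormal_basis g V m xi" "orthonormal_basis g V' m xi'"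
    and "\<forall>i<m. T (xi i) = xi' i"
  shows "T ` V = V'"
proof -
  have "(\<lambda>i. T (xi i)) ` {..<m} = xi' ` {..<m}"
    using assms(4) by auto
  then show ?thesis
    using span_image_orthonormal_basis[OF assms(2,1)] assms(3)
    unfolding orthonormal_basis_def by simp
qed

section \<open>Symmetric bilinear forms\<close>

locale sym_bilinear_form =
  fixes g :: "'a::euclidean_space \<Rightarrow> 'a \<Rightarrow> real"
  assumes bilinear: "bilinear g"
    and symmetric: "g x y = g y x"
begin


lemma linear_left: "linear (\<lambda>x. g x y)"
  and linear_right: "linear (\<lambda>y. g x y)"
  using bilinear by (simp_all add: bilinear_def)

lemmas form_simps = bilinear_scale_left[OF bilinear] bilinear_scale_right[OF bilinear]
  bilinear_sum_left[OF bilinear] bilinear_sum_right[OF bilinear]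
  bilinear_ladd[OF bilinear] bilinear_radd[OF bilinear]
  bilinear_lsub[OF bilinear] bilinear_rsub[OF bilinear]
  bilinear_lneg[OF bilinear] bilinear_rneg[OF bilinear]
  bilinear_lzero[OF bilinear] bilinear_rzero[OF bilinear]

lemma orthogonal_span:
  assumes "x \<in> span S" "\<And>s. s \<in> S \<Longrightarrow> g s y = 0"
  shows "g x y = 0"
  using span_induct[OF assms(1), of "\<lambda>x. g x y = 0"] assms(2)
    linear_subspace_kernel[OF linear_left] by auto

lemma subspace_orthogonal_in:
  assumes "subspace V"
  shows "subspace {y\<in>V. g u y = 0}"
  using subspace_inter[OF assms linear_subspace_kernel[OF linear_right, of u]]
  by (simp add: Int_def)

lemma scaled_self_sgn:
  "g ((1 / sqrt \<bar>g x x\<bar>) *\<^sub>R x) ((1 / sqrt \<bar>g x x\<bar>) *\<^sub>R x) = sgn (g x x)"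
  by (simp only: form_simps sqrt_abs_normalize)

lemma span_insert_orthogonal_in:
  assumes "subspace V" "u \<in> V" "g u u \<noteq> 0" "span D = {y\<in>V. g u y = 0}"
  shows "span (insert u D) = V"
proof
  show "span (insert u D) \<subseteq> V"
    using assms span_superset[of D] by (intro span_minimal) auto
  show "V \<subseteq> span (insert u D)"
  proof
    fix v assume v: "v \<in> V"
    let ?k = "g u v / g u u"
    have "v - ?k *\<^sub>R u \<in> span D"
      using v assms by (simp add: subspace_diff subspace_scale form_simps)
    then show "v \<in> span (insert u D)"
      using span_breakdown_eq by blast
  qed
qed

lemma dim_orthogonal_in_less:
  assumes "subspace V" "u \<in> V" "g u u \<noteq> 0"
  shows "dim {y\<in>V. g u y = 0} < dim V"
proof (rule dim_psubset)
  show "span {y\<in>V. g u y = 0} \<subset> span V"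
    unfolding span_eq_iff[THEN iffD2, OF subspace_orthogonal_in[OF assms(1)]]
      span_eq_iff[THEN iffD2, OF assms(1)]
    using assms(2,3) by auto
qed

definition signed_orthonormal :: "'a set \<Rightarrow> bool" where
  "signed_orthonormal D \<longleftrightarrow> finite D \<and> (\<forall>a\<in>D. \<forall>b\<in>D. a \<noteq> b \<longrightarrow> g a b = 0)
     \<and> (\<forall>a\<in>D. g a a = 1 \<or> g a a = -1)"

definition isometry_on :: "'a set \<Rightarrow> ('a \<Rightarrow> 'a) \<Rightarrow> bool" where
  "isometry_on E T \<longleftrightarrow> linear T \<and> (\<forall>x\<in>E. \<forall>y\<in>E. g (T x) (T y) = g x y) \<and> T ` E = E"

text \<open>By Sylvester's law of inertia every nondegenerate subspace has an index; here the index
  is a hypothesis on all signed orthonormal bases, checked directly for the subspaces at hand.\<close>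

definition has_index :: "'a set \<Rightarrow> nat \<Rightarrow> bool" where
  "has_index E \<nu> \<longleftrightarrow>
     (\<forall>B. B \<subseteq> E \<and> signed_orthonormal B \<and> span B = E \<longrightarrow> card {b\<in>B. g b b = -1} = \<nu>)"

lemma signed_orthonormal_subset:
  "signed_orthonormal D \<Longrightarrow> D' \<subseteq> D \<Longrightarrow> signed_orthonormal D'"
  unfolding signed_orthonormal_def by (auto intro: finite_subset)

lemma signed_orthonormal_coeff:
  assumes "signed_orthonormal D" "c \<in> D"
  shows "g (\<Sum>v\<in>D. u v *\<^sub>R v) c = u c * g c c"
proof -
  have "g (\<Sum>v\<in>D. u v *\<^sub>R v) c = (\<Sum>v\<in>D. u v * g v c)"
    by (simp add: form_simps)
  also have "\<dots> = (\<Sum>v\<in>D. if v = c then u c * g c c else 0)"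
    using assms by (intro sum.cong) (auto simp: signed_orthonormal_def)
  finally show ?thesis
    using assms by (simp add: signed_orthonormal_def)
qed

lemma signed_orthonormal_expansion:
  assumes "signed_orthonormal D" "x \<in> span D"
  shows "x = (\<Sum>c\<in>D. (g c c * g x c) *\<^sub>R c)"
proof -
  have "finite D"
    using assms(1) unfolding signed_orthonormal_def by simp
  then obtain u where u: "x = (\<Sum>v\<in>D. u v *\<^sub>R v)"
    using assms(2) span_finite by blast
  have "g c c * g x c = u c" if "c \<in> D" for c
    using signed_orthonormal_coeff[OF assms(1) that, of u] assms(1) that
    unfolding u signed_orthonormal_def by auto
  then show ?thesis
    using u by (metis (no_types, lifting) sum.cong)
qed

lemma signed_orthonormal_quadratic:
  assumes "signed_orthonormal D" "x \<in> span D"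
  shows "g x x = (\<Sum>c\<in>D. g c c * (g x c)\<^sup>2)"
proof -
  have "g x x = g (\<Sum>c\<in>D. (g c c * g x c) *\<^sub>R c) x"
    using signed_orthonormal_expansion[OF assms] by simp
  also have "\<dots> = (\<Sum>c\<in>D. g c c * g x c * g c x)"
    by (simp add: form_simps)
  also have "\<dots> = (\<Sum>c\<in>D. g c c * (g x c)\<^sup>2)"
    by (simp add: power2_eq_square symmetric[of _ x] mult.assoc)
  finally show ?thesis .
qed

lemma signed_orthonormal_independent:
  assumes "signed_orthonormal D"
  shows "independent D"
proof (rule independent_if_scalars_zero)
  show "finite D"
    using assms unfolding signed_orthonormal_def by simp
  fix u x assume "(\<Sum>x\<in>D. u x *\<^sub>R x) = 0" "x \<in> D"
  then show "u x = 0"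
    using signed_orthonormal_coeff[OF assms \<open>x \<in> D\<close>, of u] assms
    unfolding signed_orthonormal_def by (auto simp: form_simps)
qed

lemma signed_orthonormal_card_eq_dim:
  assumes "signed_orthonormal B" "B \<subseteq> E" "span B = E"
  shows "card B = dim E"
  using basis_card_eq_dim[OF assms(2) _ signed_orthonormal_independent[OF assms(1)]] assms(3)
  by simp

lemma exists_non_null:
  assumes "subspace C" "\<not> degenerate_subspace g C" "C \<noteq> {0}"
  shows "\<exists>x\<in>C. g x x \<noteq> 0"
proof (rule ccontr)
  assume null: "\<not> ?thesis"
  obtain v where v: "v \<in> C" "v \<noteq> 0"
    using assms(1,3) subspace_0 by blast
  have "g v y = 0" if "y \<in> C" for y
  proof -
    have "g (v + y) (v + y) = 0"
      using null v that assms(1) subspace_add by blast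
    moreover have "g y v = g v y"
      by (rule symmetric)
    ultimately show ?thesis
      using null v that by (simp add: form_simps)
  qed
  then show False
    using assms(2) v unfolding degenerate_subspace_def by blast
qed

lemma nondegenerate_orthogonal_in:
  assumes "subspace C" "\<not> degenerate_subspace g C" "u \<in> C" "g u u \<noteq> 0"
  shows "\<not> degenerate_subspace g {y\<in>C. g u y = 0}"
proof
  assume "degenerate_subspace g {y\<in>C. g u y = 0}"
  then obtain y where y: "y \<in> C" "g u y = 0" "y \<noteq> 0" "\<forall>z\<in>{y\<in>C. g u y = 0}. g y z = 0"
    unfolding degenerate_subspace_def by blast
  have "g y z = 0" if "z \<in> C" for z
  proof -
    let ?k = "g u z / g u u"
    have "z - ?k *\<^sub>R u \<in> {y\<in>C. g u y = 0}"
      using assms that by (simp add: subspace_diff subspace_scale form_simps)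
    then have "g y (z - ?k *\<^sub>R u) = 0"
      using y(4) by blast
    moreover have "g y u = 0"
      using y(2) symmetric by metis
    ultimately show ?thesis
      by (simp add: form_simps)
  qed
  then show False
    using assms(2) y unfolding degenerate_subspace_def by blast
qed

lemma signed_orthonormal_basis_exists:
  "subspace C \<Longrightarrow> \<not> degenerate_subspace g C \<Longrightarrow>
    \<exists>B. B \<subseteq> C \<and> signed_orthonormal B \<and> span B = C"
proof (induction "dim C" arbitrary: C rule: less_induct)
  case less
  show ?case
  proof (cases "C = {0}")
    case True
    then show ?thesis
      by (intro exI[of _ "{}"]) (auto simp: signed_orthonormal_def)
  next
    case False
    obtain x where x: "x \<in> C" "g x x \<noteq> 0"
      using exists_non_null[OF less.prems False] by blast
    define u where "u = (1 / sqrt \<bar>g x x\<bar>) *\<^sub>R x"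
    have uu: "g u u = sgn (g x x)"
      unfolding u_def by (rule scaled_self_sgn)
    then have uu0: "g u u \<noteq> 0" and uu1: "g u u = 1 \<or> g u u = -1"
      using x(2) by (auto simp: sgn_if)
    have uC: "u \<in> C"
      unfolding u_def using x less.prems(1) by (simp add: subspace_scale)
    let ?C0 = "{y\<in>C. g u y = 0}"
    obtain B0 where B0: "B0 \<subseteq> ?C0" "signed_orthonormal B0" "span B0 = ?C0"
      using less.hyps[OF dim_orthogonal_in_less[OF less.prems(1) uC uu0]
          subspace_orthogonal_in[OF less.prems(1)]
          nondegenerate_orthogonal_in[OF less.prems uC uu0]] by blast
    show ?thesis
    proof (intro exI[of _ "insert u B0"] conjI)
      show "insert u B0 \<subseteq> C"
        using uC B0(1) by auto
      have orth: "g u d = 0 \<and> g d u = 0" if "d \<in> B0" for d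
        using B0(1) that symmetric[of d u] by auto
      then have "u \<notin> B0"
        using uu0 by auto
      then show "signed_orthonormal (insert u B0)"
        using B0(2) uu1 orth unfolding signed_orthonormal_def by auto
      show "span (insert u B0) = C"
        by (rule span_insert_orthogonal_in[OF less.prems(1) uC uu0 B0(3)])
    qed
  qed
qed

lemma signed_orthonormal_residual:
  assumes "signed_orthonormal A" "a \<in> A"
  shows "g a (y - (\<Sum>c\<in>A. (g c c * g y c) *\<^sub>R c)) = 0"
proof -
  have "g (\<Sum>c\<in>A. (g c c * g y c) *\<^sub>R c) a = g a a * g a a * g y a"
    using signed_orthonormal_coeff[OF assms] by simp
  also have "\<dots> = g y a"
    using assms unfolding signed_orthonormal_def by auto
  finally show ?thesis
    using symmetric by (simp add: form_simps)
qed

lemma signed_orthonormal_extend: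
  assumes E: "subspace E" "\<not> degenerate_subspace g E"
    and A: "A \<subseteq> E" "signed_orthonormal A"
  shows "\<exists>B. A \<inter> B = {} \<and> B \<subseteq> E \<and> signed_orthonormal (A \<union> B) \<and> span (A \<union> B) = E"
proof -
  define p where "p y = (\<Sum>c\<in>A. (g c c * g y c) *\<^sub>R c)" for y
  define C where "C = {x\<in>E. \<forall>a\<in>A. g a x = 0}"
  have pA: "p y \<in> span A" for y
    unfolding p_def by (intro span_sum span_scale span_base)
  have pE: "p y \<in> E" for y
    using pA A(1) E(1) span_minimal by blast
  have residual_C: "y - p y \<in> C" if "y \<in> E" for y
    using signed_orthonormal_residual[OF A(2)] that pE E(1)
    unfolding C_def p_def by (simp add: subspace_diff)
  have C: "subspace C"
    unfolding C_def subspace_def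
    using E(1) by (auto simp: subspace_0 subspace_add subspace_scale form_simps)
  have "\<not> degenerate_subspace g C"
  proof
    assume "degenerate_subspace g C"
    then obtain x where x: "x \<in> C" "x \<noteq> 0" "\<forall>z\<in>C. g x z = 0"
      unfolding degenerate_subspace_def by blast
    have "g x y = 0" if "y \<in> E" for y
    proof -
      have "g (p y) x = 0"
        using orthogonal_span[OF pA] x(1) unfolding C_def by blast
      then have "g x (p y) = 0"
        using symmetric by metis
      moreover have "g x (y - p y) = 0"
        using x(3) residual_C[OF that] by blast
      ultimately show ?thesis
        by (simp add: form_simps)
    qed
    then show False
      using E(2) x unfolding C_def degenerate_subspace_def by blast
  qed
  then obtain B where B: "B \<subseteq> C" "signed_orthonormal B" "span B = C"
    using signed_orthonormal_basis_exists[OF C] by blast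
  have AB: "g a b = 0 \<and> g b a = 0" if "a \<in> A" "b \<in> B" for a b
    using that B(1) symmetric[of b a] unfolding C_def by auto
  have "A \<inter> B = {}"
    using AB A(2) unfolding signed_orthonormal_def by fastforce
  moreover have "B \<subseteq> E"
    using B(1) unfolding C_def by auto
  moreover have "signed_orthonormal (A \<union> B)"
    using A(2) B(2) AB unfolding signed_orthonormal_def by auto
  moreover have "span (A \<union> B) = E"
  proof
    show "span (A \<union> B) \<subseteq> E"
      using A(1) \<open>B \<subseteq> E\<close> E(1) by (simp add: span_minimal)
    show "E \<subseteq> span (A \<union> B)"
    proof
      fix y assume "y \<in> E"
      then have "p y + (y - p y) \<in> span (A \<union> B)"
        using pA[of y] residual_C B(3) span_mono[of A "A \<union> B"] span_mono[of B "A \<union> B"]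
        by (intro span_add) auto
      then show "y \<in> span (A \<union> B)"
        by simp
    qed
  qed
  ultimately show ?thesis
    by blast
qed

lemma isometry_of_signed_orthonormal_bases:
  assumes D: "signed_orthonormal D" "span D = E" and D': "signed_orthonormal D'" "span D' = E"
    and \<phi>: "bij_betw \<phi> D D'" "\<forall>c\<in>D. g (\<phi> c) (\<phi> c) = g c c"
  shows "\<exists>T. isometry_on E T \<and> (\<forall>c\<in>D. T c = \<phi> c)"
proof -
  obtain T where T: "linear T" "\<forall>c\<in>D. T c = \<phi> c"
    using linear_independent_extend[OF signed_orthonormal_independent[OF D(1)]] by blast
  have on_basis: "g (T c) (T d) = g c d" if "c \<in> D" "d \<in> D" for c d
  proof (cases "c = d")
    case False
    then have "\<phi> c \<noteq> \<phi> d"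
      using \<phi>(1) that by (auto dest: bij_betw_imp_inj_on inj_onD)
    moreover have "\<phi> c \<in> D'" "\<phi> d \<in> D'"
      using \<phi>(1) that by (auto dest: bij_betwE)
    ultimately show ?thesis
      using D(1) D'(1) False that T(2) unfolding signed_orthonormal_def by auto
  qed (use \<phi>(2) T(2) that in auto)
  have "g (T x) (T y) = g x y" if "x \<in> E" "y \<in> E" for x y
    by (rule bilinear_eq[OF bilinear_compose_linear[OF bilinear T(1) T(1)] bilinear, of E D E D])
      (use D(2) that on_basis in auto)
  moreover have "T ` E = E"
  proof -
    have "T ` D = D'"
      using T(2) bij_betw_imp_surj_on[OF \<phi>(1)] by auto
    then show ?thesis
      using linear_span_image[OF T(1), of D] D(2) D'(2) by simp
  qed
  ultimately show ?thesis
    using T unfolding isometry_on_def by blast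
qed

lemma card_sign_fibre:
  assumes "has_index E \<nu>" "B \<subseteq> E" "signed_orthonormal B" "span B = E"
  shows "card {b\<in>B. g b b = c} = (if c = -1 then \<nu> else if c = 1 then dim E - \<nu> else 0)"
proof (cases "c = -1 \<or> c = 1")
  case True
  have fin: "finite B"
    using assms(3) unfolding signed_orthonormal_def by simp
  have "B = {b\<in>B. g b b = -1} \<union> {b\<in>B. g b b = 1}"
    using assms(3) unfolding signed_orthonormal_def by auto
  moreover have "card ({b\<in>B. g b b = -1} \<union> {b\<in>B. g b b = 1})
      = card {b\<in>B. g b b = -1} + card {b\<in>B. g b b = 1}"
    by (rule card_Un_disjoint) (use fin in auto)
  moreover have "card B = dim E"
    by (rule signed_orthonormal_card_eq_dim[OF assms(3,2,4)])
  moreover have "card {b\<in>B. g b b = -1} = \<nu>"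
    using assms unfolding has_index_def by blast
  ultimately show ?thesis
    using True by auto
next
  case False
  then have "{b\<in>B. g b b = c} = {}"
    using assms(3) unfolding signed_orthonormal_def by auto
  then have "card {b\<in>B. g b b = c} = 0"
    by (simp only: card.empty)
  with False show ?thesis
    by simp
qed

lemma isometry_extension:
  assumes E: "subspace E" "\<not> degenerate_subspace g E" "has_index E \<nu>"
    and A: "A \<subseteq> E" "signed_orthonormal A" and A': "A' \<subseteq> E" "signed_orthonormal A'"
    and \<phi>: "bij_betw \<phi> A A'" "\<forall>a\<in>A. g (\<phi> a) (\<phi> a) = g a a"
  shows "\<exists>T. isometry_on E T \<and> (\<forall>a\<in>A. T a = \<phi> a)"
proof -
  obtain B where B: "A \<inter> B = {}" "B \<subseteq> E" "signed_orthonormal (A \<union> B)" "span (A \<union> B) = E"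
    using signed_orthonormal_extend[OF E(1,2) A] by blast
  obtain B' where B': "A' \<inter> B' = {}" "B' \<subseteq> E" "signed_orthonormal (A' \<union> B')" "span (A' \<union> B') = E"
    using signed_orthonormal_extend[OF E(1,2) A'] by blast
  have fin: "finite A" "finite B" "finite A'" "finite B'"
    using B(3) B'(3) unfolding signed_orthonormal_def by auto
  have "A \<union> B \<subseteq> E" "A' \<union> B' \<subseteq> E"
    using A(1) A'(1) B(2) B'(2) by auto
  then have fibre_AB: "card {x\<in>A \<union> B. g x x = c} = card {x\<in>A' \<union> B'. g x x = c}" for c
    by (simp only: card_sign_fibre[OF E(3) _ B(3,4)] card_sign_fibre[OF E(3) _ B'(3,4)])
  have fibre_A: "card {a\<in>A. g a a = c} = card {a\<in>A'. g a a = c}" for c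
  proof -
    have image: "\<phi> ` {a\<in>A. g a a = c} = {a\<in>A'. g a a = c}"
    proof
      show "\<phi> ` {a\<in>A. g a a = c} \<subseteq> {a\<in>A'. g a a = c}"
        using bij_betwE[OF \<phi>(1)] \<phi>(2) by auto
      show "{a\<in>A'. g a a = c} \<subseteq> \<phi> ` {a\<in>A. g a a = c}"
      proof
        fix a' assume a': "a' \<in> {a\<in>A'. g a a = c}"
        then have "a' \<in> \<phi> ` A"
          using bij_betw_imp_surj_on[OF \<phi>(1)] by simp
        then obtain a where "a \<in> A" "a' = \<phi> a"
          by blast
        then show "a' \<in> \<phi> ` {a\<in>A. g a a = c}"
          using \<phi>(2) a' by auto
      qed
    qed
    have "inj_on \<phi> {a\<in>A. g a a = c}"
      by (rule inj_on_subset[OF bij_betw_imp_inj_on[OF \<phi>(1)]]) blast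
    from card_image[OF this] show ?thesis
      unfolding image by simp
  qed
  have "card {b\<in>B. g b b = c} = card {b\<in>B'. g b b = c}" for c
    using fibre_AB[of c] fibre_A[of c] card_fibre_Un[OF fin(1,2) B(1), of "\<lambda>x. g x x" c]
      card_fibre_Un[OF fin(3,4) B'(1), of "\<lambda>x. g x x" c] by simp
  then obtain \<sigma> where \<sigma>: "bij_betw \<sigma> B B'" "\<forall>b\<in>B. g (\<sigma> b) (\<sigma> b) = g b b"
    using bij_betw_preserving_fibres[OF fin(2,4), of "\<lambda>b. g b b" "\<lambda>b. g b b"] by blast
  define \<psi> where "\<psi> c = (if c \<in> A then \<phi> c else \<sigma> c)" for c
  have "bij_betw \<psi> A A'"
    using \<phi>(1) by (rule bij_betw_cong[THEN iffD1, rotated]) (simp add: \<psi>_def)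
  moreover have "bij_betw \<psi> B B'"
    using \<sigma>(1) by (rule bij_betw_cong[THEN iffD1, rotated]) (use B(1) in \<open>auto simp: \<psi>_def\<close>)
  ultimately have bij: "bij_betw \<psi> (A \<union> B) (A' \<union> B')"
    using B'(1) by (intro bij_betw_combine)
  have "\<forall>c\<in>A \<union> B. g (\<psi> c) (\<psi> c) = g c c"
    using \<phi>(2) \<sigma>(2) by (auto simp: \<psi>_def)
  then obtain T where T: "isometry_on E T" "\<forall>c\<in>A \<union> B. T c = \<psi> c"
    using isometry_of_signed_orthonormal_bases[OF B(3,4) B'(3,4) bij] by blast
  then have "\<forall>a\<in>A. T a = \<phi> a"
    by (simp add: \<psi>_def)
  with T(1) show ?thesis
    by blast
qed

lemma isometry_extension_orthonormal_family:
  assumes E: "subspace E" "\<not> degenerate_subspace g E" "has_index E \<nu>"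
    and I: "finite I" and uE: "\<forall>i\<in>I. u i \<in> E \<and> u' i \<in> E"
    and \<epsilon>: "\<forall>i\<in>I. \<epsilon> i = 1 \<or> \<epsilon> i = -1"
    and gu: "\<forall>i\<in>I. \<forall>j\<in>I. g (u i) (u j) = (if i = j then \<epsilon> i else 0)"
    and gu': "\<forall>i\<in>I. \<forall>j\<in>I. g (u' i) (u' j) = (if i = j then \<epsilon> i else 0)"
  shows "\<exists>T. isometry_on E T \<and> (\<forall>i\<in>I. T (u i) = u' i)"
proof -
  have inj: "inj_on u I" "inj_on u' I"
    by (auto intro!: inj_onI) (metis \<epsilon> gu zero_neq_one zero_neq_neg_one,
                               metis \<epsilon> gu' zero_neq_one zero_neq_neg_one)
  have A: "signed_orthonormal (u ` I)" "signed_orthonormal (u' ` I)"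
    using I \<epsilon> gu gu' unfolding signed_orthonormal_def by auto
  define \<phi> where "\<phi> = u' \<circ> the_inv_into I u"
  have \<phi>u: "\<phi> (u i) = u' i" if "i \<in> I" for i
    unfolding \<phi>_def using the_inv_into_f_f[OF inj(1) that] by simp
  have bij: "bij_betw \<phi> (u ` I) (u' ` I)"
    unfolding \<phi>_def
    by (rule bij_betw_trans[OF bij_betw_the_inv_into]) (use inj in \<open>auto simp: bij_betw_def\<close>)
  have sign: "\<forall>a\<in>u ` I. g (\<phi> a) (\<phi> a) = g a a"
    using \<phi>u gu gu' by auto
  have "u ` I \<subseteq> E" "u' ` I \<subseteq> E"
    using uE by auto
  then obtain T where "isometry_on E T" "\<forall>a\<in>u ` I. T a = \<phi> a"
    using isometry_extension[OF E _ A(1) _ A(2) bij sign] by blast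
  then show ?thesis
    using \<phi>u by auto
qed

lemma isometry_extension_orthogonal_family:
  assumes E: "subspace E" "\<not> degenerate_subspace g E" "has_index E \<nu>"
    and I: "finite I" and cE: "\<forall>i\<in>I. c i \<in> E \<and> c' i \<in> E"
    and \<mu>: "\<forall>i\<in>I. \<mu> i \<noteq> 0"
    and gc: "\<forall>i\<in>I. \<forall>j\<in>I. g (c i) (c j) = (if i = j then \<mu> i else 0)"
    and gc': "\<forall>i\<in>I. \<forall>j\<in>I. g (c' i) (c' j) = (if i = j then \<mu> i else 0)"
  shows "\<exists>T. isometry_on E T \<and> (\<forall>i\<in>I. T (c i) = c' i)"
proof -
  define s where "s i = 1 / sqrt \<bar>\<mu> i\<bar>" for i
  have s: "s i \<noteq> 0" if "i \<in> I" for i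
    using \<mu> that unfolding s_def by auto
  have ss: "s i * (s i * \<mu> i) = sgn (\<mu> i)" for i
    unfolding s_def by (rule sqrt_abs_normalize)
  have normalized: "\<forall>i\<in>I. \<forall>j\<in>I. g ((s i) *\<^sub>R c i) ((s j) *\<^sub>R c j) = (if i = j then sgn (\<mu> i) else 0)"
    "\<forall>i\<in>I. \<forall>j\<in>I. g ((s i) *\<^sub>R c' i) ((s j) *\<^sub>R c' j) = (if i = j then sgn (\<mu> i) else 0)"
    using gc gc' ss by (auto simp: form_simps)
  have in_E: "\<forall>i\<in>I. (s i) *\<^sub>R c i \<in> E \<and> (s i) *\<^sub>R c' i \<in> E"
    using cE E(1) by (simp add: subspace_scale)
  have "\<forall>i\<in>I. sgn (\<mu> i) = 1 \<or> sgn (\<mu> i) = -1"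
    using \<mu> by (auto simp: sgn_if)
  then obtain T where T: "isometry_on E T" "\<forall>i\<in>I. T ((s i) *\<^sub>R c i) = (s i) *\<^sub>R c' i"
    using isometry_extension_orthonormal_family[OF E I in_E _ normalized] by blast
  have "T (c i) = c' i" if "i \<in> I" for i
  proof -
    have "s i *\<^sub>R T (c i) = s i *\<^sub>R c' i"
      using T that linear_scale[of T "s i" "c i"] unfolding isometry_on_def by auto
    then show ?thesis
      using s[OF that] by auto
  qed
  then show ?thesis
    using T(1) by blast
qed

lemma hyperbolic_pair:
  assumes "g n n = 0" "g k k = 0" "g n k = 1"
  shows "g (n + k) (n + k) = 2" "g (n - k) (n - k) = -2"
    "g (n + k) (n - k) = 0" "g (n - k) (n + k) = 0"
  using assms symmetric[of k n] by (simp_all add: form_simps)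

lemma orthogonal_hyperbolic_pair:
  assumes "g v n = 0" "g v k = 0"
  shows "g v (n + k) = 0" "g v (n - k) = 0" "g (n + k) v = 0" "g (n - k) v = 0"
  using assms symmetric[of n v] symmetric[of k v] by (simp_all add: form_simps)

lemma orthogonal_family_coeff:
  assumes "\<forall>i\<in>I. \<forall>j\<in>I. g (a i) (a j) = (if i = j then lam i else 0)" "finite I" "i \<in> I"
  shows "g (\<Sum>j\<in>I. k j *\<^sub>R a j) (a i) = k i * lam i"
proof -
  have "g (\<Sum>j\<in>I. k j *\<^sub>R a j) (a i) = (\<Sum>j\<in>I. if j = i then k i * lam i else 0)"
    using assms(1,3) by (auto simp: form_simps intro: sum.cong)
  then show ?thesis
    using assms(2,3) by simp
qed

lemma null_of_nondegenerate_span: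
  fixes a :: "nat \<Rightarrow> 'a"
  assumes "\<not> degenerate_subspace g (span (a ` {..<m}))" "i < m"
    and "\<forall>j<m. g (a j) (a i) = 0"
  shows "a i = 0"
proof (rule ccontr)
  assume "a i \<noteq> 0"
  moreover have "g (a i) y = 0" if "y \<in> span (a ` {..<m})" for y
    using orthogonal_span[OF that, of "a i"] assms(3) symmetric[of "a i" y] by auto
  moreover have "a i \<in> span (a ` {..<m})"
    using assms(2) by (intro span_base) auto
  ultimately show False
    using assms(1) unfolding degenerate_subspace_def by blast
qed

lemma exists_hyperbolic_partner:
  assumes E: "subspace E" "\<not> degenerate_subspace g E"
    and n: "n \<in> E" "n \<noteq> 0" "g n n = 0"
    and J: "finite J" "\<forall>j\<in>J. a j \<in> E" "\<forall>j\<in>J. lam j \<noteq> 0"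
    and ga: "\<forall>i\<in>J. \<forall>j\<in>J. g (a i) (a j) = (if i = j then lam i else 0)"
    and na: "\<forall>j\<in>J. g (a j) n = 0"
  shows "\<exists>k\<in>E. g k k = 0 \<and> g n k = 1 \<and> (\<forall>j\<in>J. g (a j) k = 0)"
proof -
  obtain z where z: "z \<in> E" "g n z \<noteq> 0"
    using E(2) n unfolding degenerate_subspace_def by blast
  define y where "y = z - (\<Sum>j\<in>J. (g (a j) z / lam j) *\<^sub>R a j)"
  have "y \<in> E"
    unfolding y_def using z J E(1)
    by (intro subspace_diff subspace_sum subspace_scale) auto
  have "g n y = g n z"
    using na symmetric[of n] unfolding y_def by (simp add: form_simps)
  have ay: "g (a j) y = 0" if "j \<in> J" for j
  proof -
    have "g (\<Sum>i\<in>J. (g (a i) z / lam i) *\<^sub>R a i) (a j) = g (a j) z"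
      using orthogonal_family_coeff[OF ga J(1) that] J(3) that by simp
    then show ?thesis
      unfolding y_def using symmetric[of "a j"] by (simp add: form_simps)
  qed
  define k0 where "k0 = (1 / g n y) *\<^sub>R y"
  have nk0: "g n k0 = 1"
    unfolding k0_def using \<open>g n y = g n z\<close> z(2) by (simp add: form_simps)
  define k where "k = k0 - (g k0 k0 / 2) *\<^sub>R n"
  have "k \<in> E"
    unfolding k_def k0_def using \<open>y \<in> E\<close> n(1) E(1) by (simp add: subspace_diff subspace_scale)
  moreover have "g n k = 1" "g k k = 0"
    using nk0 n(3) symmetric[of k0 n] unfolding k_def by (simp_all add: form_simps algebra_simps)
  moreover have "g (a j) k = 0" if "j \<in> J" for j
    using ay[OF that] na that unfolding k_def k0_def by (simp add: form_simps)
  ultimately show ?thesis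
    by blast
qed

lemma isometry_extension_nondegenerate_span:
  fixes a a' :: "nat \<Rightarrow> 'a"
  assumes E: "subspace E" "\<not> degenerate_subspace g E" "has_index E \<nu>"
    and aE: "\<forall>i<m. a i \<in> E \<and> a' i \<in> E"
    and ga: "\<forall>i<m. \<forall>j<m. g (a i) (a j) = (if i = j then lam i else 0)"
    and ga': "\<forall>i<m. \<forall>j<m. g (a' i) (a' j) = (if i = j then lam i else 0)"
    and nd: "\<not> degenerate_subspace g (span (a ` {..<m}))"
      "\<not> degenerate_subspace g (span (a' ` {..<m}))"
  shows "\<exists>T. isometry_on E T \<and> (\<forall>i<m. T (a i) = a' i)"
proof -
  let ?I = "{i. i < m \<and> lam i \<noteq> 0}"
  have "finite ?I"
    by (rule finite_subset[of _ "{..<m}"]) auto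
  moreover have "\<forall>i\<in>?I. a i \<in> E \<and> a' i \<in> E" "\<forall>i\<in>?I. lam i \<noteq> 0"
    "\<forall>i\<in>?I. \<forall>j\<in>?I. g (a i) (a j) = (if i = j then lam i else 0)"
    "\<forall>i\<in>?I. \<forall>j\<in>?I. g (a' i) (a' j) = (if i = j then lam i else 0)"
    using aE ga ga' by simp_all
  ultimately obtain T where T: "isometry_on E T" "\<forall>i\<in>?I. T (a i) = a' i"
    using isometry_extension_orthogonal_family[OF E] by blast
  have "T (a i) = a' i" if "i < m" for i
  proof (cases "lam i = 0")
    case True
    then have "a i = 0" "a' i = 0"
      using null_of_nondegenerate_span[OF nd(1) that] null_of_nondegenerate_span[OF nd(2) that]
        ga ga' that by auto
    then show ?thesis
      using T(1) unfolding isometry_on_def by (simp add: linear_0)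
  qed (use T(2) that in auto)
  then show ?thesis
    using T(1) by blast
qed

lemma isometry_extension_one_null:
  fixes a a' :: "nat \<Rightarrow> 'a"
  assumes E: "subspace E" "\<not> degenerate_subspace g E" "has_index E \<nu>"
    and aE: "\<forall>i<m. a i \<in> E \<and> a' i \<in> E"
    and ga: "\<forall>i<m. \<forall>j<m. g (a i) (a j) = (if i = j then lam i else 0)"
    and ga': "\<forall>i<m. \<forall>j<m. g (a' i) (a' j) = (if i = j then lam i else 0)"
    and i0: "i0 < m" "lam i0 = 0" "a i0 \<noteq> 0" "a' i0 \<noteq> 0" "\<forall>j<m. j \<noteq> i0 \<longrightarrow> lam j \<noteq> 0"
  shows "\<exists>T. isometry_on E T \<and> (\<forall>i<m. T (a i) = a' i)"
proof -
  define J where "J = {..<m} - {i0}"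
  have J: "finite J" "\<forall>j\<in>J. lam j \<noteq> 0"
    using i0(5) unfolding J_def by auto
  have gJ: "\<forall>i\<in>J. \<forall>j\<in>J. g (b i) (b j) = (if i = j then lam i else 0)"
    "\<forall>j\<in>J. g (b j) (b i0) = 0" "g (b i0) (b i0) = 0"
    if "\<forall>i<m. \<forall>j<m. g (b i) (b j) = (if i = j then lam i else 0)" for b
    using that i0(1,2) unfolding J_def by auto
  obtain k where k: "k \<in> E" "g k k = 0" "g (a i0) k = 1" "\<forall>j\<in>J. g (a j) k = 0"
    using exists_hyperbolic_partner[OF E(1,2) _ i0(3) _ J(1) _ J(2) gJ(1,2)[OF ga]] aE i0(1) gJ(3)[OF ga]
    unfolding J_def by auto
  obtain k' where k': "k' \<in> E" "g k' k' = 0" "g (a' i0) k' = 1" "\<forall>j\<in>J. g (a' j) k' = 0"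
    using exists_hyperbolic_partner[OF E(1,2) _ i0(4) _ J(1) _ J(2) gJ(1,2)[OF ga']] aE i0(1) gJ(3)[OF ga']
    unfolding J_def by auto
  \<comment> \<open>the null vector \<open>a i0\<close> is replaced by the two non-null vectors \<open>a i0 \<plusminus> k\<close>\<close>
  define I :: "(nat + bool) set" where "I = Inl ` J \<union> range Inr"
  define c where "c b kk = case_sum b (\<lambda>s. if s then b i0 + kk else b i0 - kk)"
    for b :: "nat \<Rightarrow> 'a" and kk
  define \<mu> where "\<mu> = case_sum lam (\<lambda>s. if s then 2 else - 2 :: real)"
  have gc: "\<forall>x\<in>I. \<forall>y\<in>I. g (c b kk x) (c b kk y) = (if x = y then \<mu> x else 0)"
    if gb: "\<forall>i<m. \<forall>j<m. g (b i) (b j) = (if i = j then lam i else 0)"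
      and kk: "g kk kk = 0" "g (b i0) kk = 1" "\<forall>j\<in>J. g (b j) kk = 0" for b kk
  proof -
    note H = hyperbolic_pair[OF gJ(3)[OF gb] kk(1,2)]
    have P: "g (b j) (b i0 + kk) = 0 \<and> g (b j) (b i0 - kk) = 0
        \<and> g (b i0 + kk) (b j) = 0 \<and> g (b i0 - kk) (b j) = 0" if "j \<in> J" for j
      using orthogonal_hyperbolic_pair[of "b j" "b i0" kk] gJ(2)[OF gb] kk(3) that by simp
    show ?thesis
    proof (intro ballI)
      fix x y assume "x \<in> I" "y \<in> I"
      then show "g (c b kk x) (c b kk y) = (if x = y then \<mu> x else 0)"
        using H P gJ(1)[OF gb] by (cases x; cases y) (auto simp: I_def c_def \<mu>_def)
    qed
  qed
  have "\<forall>x\<in>I. c a k x \<in> E \<and> c a' k' x \<in> E"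
    using aE i0(1) k(1) k'(1) E(1) unfolding I_def c_def J_def
    by (auto simp: subspace_add subspace_diff)
  moreover have "\<forall>x\<in>I. \<mu> x \<noteq> 0"
    using J(2) unfolding I_def \<mu>_def by (auto split: if_splits)
  moreover have "finite I"
    using J(1) unfolding I_def by simp
  ultimately obtain T where T: "isometry_on E T" "\<forall>x\<in>I. T (c a k x) = c a' k' x"
    using isometry_extension_orthogonal_family[OF E _ _ _ gc[OF ga k(2-4)] gc[OF ga' k'(2-4)]]
    by blast
  have "T (a i) = a' i" if "i < m" for i
  proof (cases "i = i0")
    case True
    have "T (c a k (Inr s)) = c a' k' (Inr s)" for s
      using T(2) unfolding I_def by blast
    from this[of True] this[of False] have pm: "T (a i0 + k) = a' i0 + k'" "T (a i0 - k) = a' i0 - k'"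
      unfolding c_def by simp_all
    have lin: "linear T"
      using T(1) unfolding isometry_on_def by blast
    have "T (a i0) = T ((1/2) *\<^sub>R ((a i0 + k) + (a i0 - k)))"
      by (simp add: scaleR_2[symmetric])
    also have "\<dots> = (1/2) *\<^sub>R (T (a i0 + k) + T (a i0 - k))"
      by (simp only: linear_scale[OF lin] linear_add[OF lin])
    also have "\<dots> = a' i0"
      unfolding pm by (simp add: scaleR_2[symmetric])
    finally show ?thesis
      using True by simp
  next
    case False
    then have "Inl i \<in> I"
      using that unfolding I_def J_def by auto
    then show ?thesis
      using T(2) unfolding c_def by auto
  qed
  then show ?thesis
    using T(1) by blast
qed

lemma orthonormal_basis_signed_orthonormal:
  assumes "orthonormal_basis g V m xi"
  shows "signed_orthonormal (xi ` {..<m})"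
  using assms orthonormal_basis_inj[OF assms]
  unfolding orthonormal_basis_def signed_orthonormal_def inj_on_def by auto

lemma orthonormal_basis_expansion:
  assumes "orthonormal_basis g V m xi" "x \<in> V"
  shows "x = (\<Sum>j<m. g x (xi j) *\<^sub>R xi j)"
proof -
  have "x = (\<Sum>c\<in>xi ` {..<m}. (g c c * g x c) *\<^sub>R c)"
    using signed_orthonormal_expansion[OF orthonormal_basis_signed_orthonormal[OF assms(1)]] assms
    unfolding orthonormal_basis_def by simp
  also have "\<dots> = (\<Sum>j<m. (g (xi j) (xi j) * g x (xi j)) *\<^sub>R xi j)"
    by (rule sum.reindex_cong[OF orthonormal_basis_inj[OF assms(1)]]) auto
  also have "\<dots> = (\<Sum>j<m. g x (xi j) *\<^sub>R xi j)"
    using assms(1) unfolding orthonormal_basis_def by (intro sum.cong) auto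
  finally show ?thesis .
qed

lemma orthonormal_basis_of_set:
  assumes "D \<subseteq> V" "signed_orthonormal D" "\<forall>c\<in>D. g c c = 1" "span D = V" "dim V = m"
  shows "\<exists>xi. orthonormal_basis g V m xi \<and> xi ` {..<m} = D \<and> inj_on xi {..<m}"
proof -
  have "card D = m"
    using signed_orthonormal_card_eq_dim[OF assms(2,1,4)] assms(5) by simp
  moreover have "finite D"
    using assms(2) unfolding signed_orthonormal_def by simp
  ultimately obtain xi where xi: "bij_betw xi {..<m} D"
    using ex_bij_betw_nat_finite[of D] by (auto simp: atLeast0LessThan)
  then have inj: "inj_on xi {..<m}" and img: "xi ` {..<m} = D"
    unfolding bij_betw_def by auto
  have "g (xi i) (xi j) = (if i = j then 1 else 0)" if "i < m" "j < m" for i j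
  proof (cases "i = j")
    case False
    then have "xi i \<noteq> xi j"
      using inj that by (auto dest: inj_onD)
    then show ?thesis
      using assms(2) img that False unfolding signed_orthonormal_def by auto
  qed (use assms(3) img that in auto)
  then have "orthonormal_basis g V m xi"
    using assms(1,4) img unfolding orthonormal_basis_def by auto
  then show ?thesis
    using inj img by blast
qed

lemma basis_change_transpose:
  "transpose_mat (mat m m (\<lambda>(i, j). g (xi i) (eta j))) = mat m m (\<lambda>(i, j). g (eta i) (xi j))"
  by (rule eq_matI) (auto simp: symmetric)

lemma basis_change_orthogonal:
  assumes "orthonormal_basis g V m xi" "orthonormal_basis g V m eta"
  shows "mat m m (\<lambda>(i, j). g (xi i) (eta j)) * mat m m (\<lambda>(i, j). g (eta i) (xi j)) = 1\<^sub>m m"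
proof (rule eq_matI)
  fix i k assume ik: "i < dim_row (1\<^sub>m m)" "k < dim_col (1\<^sub>m m)"
  have "(mat m m (\<lambda>(i, j). g (xi i) (eta j)) * mat m m (\<lambda>(i, j). g (eta i) (xi j))) $$ (i, k)
      = (\<Sum>j<m. g (xi i) (eta j) * g (eta j) (xi k))"
    using ik by (simp add: scalar_prod_def atLeast0LessThan)
  also have "\<dots> = g (xi i) (\<Sum>j<m. g (xi k) (eta j) *\<^sub>R eta j)"
    by (simp add: form_simps symmetric[of "eta _" "xi k"] mult.commute)
  also have "\<dots> = g (xi i) (xi k)"
    using orthonormal_basis_expansion[OF assms(2), of "xi k"] assms(1) ik
    unfolding orthonormal_basis_def by simp
  also have "\<dots> = 1\<^sub>m m $$ (i, k)"
    using assms(1) ik unfolding orthonormal_basis_def by simp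
  finally show "(mat m m (\<lambda>(i, j). g (xi i) (eta j)) * mat m m (\<lambda>(i, j). g (eta i) (xi j))) $$ (i, k)
      = 1\<^sub>m m $$ (i, k)" .
qed auto

section \<open>Gram matrices and simultaneous diagonalization\<close>

lemma gram_similar:
  fixes h :: "'a \<Rightarrow> 'a \<Rightarrow> real"
  assumes h: "bilinear h"
    and xi: "orthonormal_basis g V m xi" and eta: "orthonormal_basis g V m eta"
  shows "similar_mat (mat m m (\<lambda>(i, j). h (xi i) (xi j))) (mat m m (\<lambda>(i, j). h (eta i) (eta j)))"
proof -
  define Q where "Q = mat m m (\<lambda>(i, j). g (xi i) (eta j))"
  define A where "A = mat m m (\<lambda>(i, j). h (xi i) (xi j))"
  define B where "B = mat m m (\<lambda>(i, j). h (eta i) (eta j))"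
  have Ot: "transpose_mat Q = mat m m (\<lambda>(i, j). g (eta i) (xi j))"
    unfolding Q_def by (rule basis_change_transpose)
  have expand: "xi i = (\<Sum>j<m. g (xi i) (eta j) *\<^sub>R eta j)" if "i < m" for i
    using orthonormal_basis_expansion[OF eta] xi that unfolding orthonormal_basis_def by simp
  have "A = Q * B * transpose_mat Q"
  proof (rule eq_matI)
    fix i k assume "i < dim_row (Q * B * transpose_mat Q)" "k < dim_col (Q * B * transpose_mat Q)"
    then have ik: "i < m" "k < m"
      by (auto simp: Q_def)
    have "(Q * B * transpose_mat Q) $$ (i, k)
        = (\<Sum>l<m. (\<Sum>j<m. g (xi i) (eta j) * h (eta j) (eta l)) * g (xi k) (eta l))"
      using ik by (simp add: Q_def B_def scalar_prod_def atLeast0LessThan)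
    also have "\<dots> = (\<Sum>l<m. \<Sum>j<m. g (xi i) (eta j) * (g (xi k) (eta l) * h (eta j) (eta l)))"
      by (intro sum.cong refl) (simp add: sum_distrib_left sum_distrib_right mult_ac)
    also have "\<dots> = (\<Sum>j<m. \<Sum>l<m. g (xi i) (eta j) * (g (xi k) (eta l) * h (eta j) (eta l)))"
      by (rule sum.swap)
    also have "\<dots> = (\<Sum>j<m. g (xi i) (eta j) * (\<Sum>l<m. g (xi k) (eta l) * h (eta j) (eta l)))"
      by (simp add: sum_distrib_left)
    also have "\<dots> = h (\<Sum>j<m. g (xi i) (eta j) *\<^sub>R eta j) (\<Sum>l<m. g (xi k) (eta l) *\<^sub>R eta l)"
      using h by (simp add: bilinear_sum_left bilinear_sum_right bilinear_scale_left bilinear_scale_right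
          sum_distrib_left)
    also have "\<dots> = A $$ (i, k)"
      using ik expand by (simp add: A_def)
    finally show "A $$ (i, k) = (Q * B * transpose_mat Q) $$ (i, k)"
      by simp
  qed (auto simp: Q_def A_def)
  moreover have "Q * transpose_mat Q = 1\<^sub>m m" "transpose_mat Q * Q = 1\<^sub>m m"
    using basis_change_orthogonal[OF xi eta] basis_change_orthogonal[OF eta xi]
    unfolding Ot by (simp_all add: Q_def)
  ultimately have "similar_mat_wit A B Q (transpose_mat Q)"
    unfolding similar_mat_wit_def by (auto simp: A_def B_def Q_def)
  then show ?thesis
    unfolding similar_mat_def A_def B_def by blast
qed

lemma char_poly_gram_eq:
  assumes "linear P" "orthonormal_basis g V m xi" "orthonormal_basis g V m eta"
  shows "char_poly (gram g m (\<lambda>i. P (xi i))) = char_poly (gram g m (\<lambda>i. P (eta i)))"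
  unfolding gram_def
  by (rule char_poly_similar, rule gram_similar[OF bilinear_compose_linear[OF bilinear assms(1,1)] assms(2,3)])

lemma same_eigenvalues_gram_of_isometry:
  assumes P: "linear P" and T: "linear T" "\<forall>x y. g (T x) (T y) = g x y" "T ` V = V'"
    and commute: "\<And>x. P (T x) = T (P x)"
    and xi: "orthonormal_basis g V m xi" and xi': "orthonormal_basis g V' m xi'"
  shows "same_eigenvalues (gram g m (\<lambda>i. P (xi i))) (gram g m (\<lambda>i. P (xi' i)))"
proof -
  have "gram g m (\<lambda>i. P (xi i)) = gram g m (\<lambda>i. P (T (xi i)))"
    unfolding gram_def commute using T(2) by simp
  moreover have "orthonormal_basis g V' m (\<lambda>i. T (xi i))"
    using orthonormal_basis_image[OF xi T(1,2)] T(3) by simp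
  ultimately show ?thesis
    unfolding same_eigenvalues_def eigen_mult_def using char_poly_gram_eq[OF P _ xi'] by simp
qed

lemma rayleigh_quotient_maximum:
  fixes h :: "'a \<Rightarrow> 'a \<Rightarrow> real"
  assumes h: "bilinear h" and V: "subspace V" "V \<noteq> {0}"
    and pos: "\<forall>v\<in>V. v \<noteq> 0 \<longrightarrow> g v v > 0"
  shows "\<exists>x0\<in>V. x0 \<noteq> 0 \<and> (\<forall>z\<in>V. z \<noteq> 0 \<longrightarrow> h z z / g z z \<le> h x0 x0 / g x0 x0)"
proof -
  define K where "K = sphere (0::'a) 1 \<inter> V"
  define R where "R x = h x x / g x x" for x
  have "compact K"
    unfolding K_def by (rule compact_Int_closed[OF compact_sphere closed_subspace[OF V(1)]])
  have K: "x \<in> V" "x \<noteq> 0" "g x x > 0" if "x \<in> K" for x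
    using pos that unfolding K_def by auto
  have normalize: "(1 / norm v) *\<^sub>R v \<in> K" if "v \<in> V" "v \<noteq> 0" for v
    unfolding K_def using that V(1) by (simp add: subspace_scale)
  then have "K \<noteq> {}"
    using V subspace_0 by blast
  moreover have "continuous_on K R"
    unfolding R_def
    using bilinear_continuous_on_compose[OF continuous_on_id continuous_on_id h]
      bilinear_continuous_on_compose[OF continuous_on_id continuous_on_id bilinear]
      K(3)
    by (intro continuous_on_divide) force+
  ultimately obtain x0 where x0: "x0 \<in> K" "\<forall>y\<in>K. R y \<le> R x0"
    using continuous_attains_sup[OF \<open>compact K\<close>] by blast
  have "R z \<le> R x0" if "z \<in> V" "z \<noteq> 0" for z
  proof -
    have "R ((1 / norm z) *\<^sub>R z) = R z"
      unfolding R_def using that by (simp add: form_simps bilinear_scale_left[OF h]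
          bilinear_scale_right[OF h])
    then show ?thesis
      using x0(2) normalize[OF that] by metis
  qed
  then show ?thesis
    using K[OF x0(1)] unfolding R_def by blast
qed

lemma rayleigh_maximizer_orthogonal:
  fixes h :: "'a \<Rightarrow> 'a \<Rightarrow> real"
  assumes h: "bilinear h" "\<And>x y. h x y = h y x" and V: "subspace V"
    and pos: "\<forall>v\<in>V. v \<noteq> 0 \<longrightarrow> g v v > 0"
    and x0: "x0 \<in> V" "x0 \<noteq> 0"
    and max: "\<forall>z\<in>V. z \<noteq> 0 \<longrightarrow> h z z / g z z \<le> h x0 x0 / g x0 x0"
    and y: "y \<in> V" "g x0 y = 0"
  shows "h x0 y = 0"
proof (rule ccontr)
  assume "h x0 y \<noteq> 0"
  define r where "r = h x0 x0 / g x0 x0"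
  obtain t where t: "2 * t * h x0 y + t\<^sup>2 * (h y y - r * g y y) > 0"
    using exists_quadratic_positive[OF \<open>h x0 y \<noteq> 0\<close>] by blast
  define z where "z = x0 + t *\<^sub>R y"
  have gx0: "g x0 x0 > 0"
    using pos x0 by blast
  have "g y x0 = 0"
    using y(2) symmetric by metis
  then have gz: "g z z = g x0 x0 + t\<^sup>2 * g y y"
    unfolding z_def using y(2)
    by (simp add: form_simps power2_eq_square algebra_simps)
  have "h y x0 = h x0 y"
    by (rule h(2))
  then have hz: "h z z = h x0 x0 + 2 * t * h x0 y + t\<^sup>2 * h y y"
    unfolding z_def using h(1)
    by (simp add: bilinear_ladd bilinear_radd bilinear_scale_left bilinear_scale_right
        power2_eq_square algebra_simps)
  have "z \<in> V"
    unfolding z_def using x0 y V by (simp add: subspace_add subspace_scale)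
  moreover have "z \<noteq> 0"
  proof
    assume "z = 0"
    moreover have "g x0 z = g x0 x0"
      unfolding z_def using y(2) by (simp add: form_simps)
    ultimately show False
      using gx0 by (simp add: form_simps)
  qed
  ultimately have "h z z \<le> r * g z z"
    using max pos unfolding r_def by (simp add: divide_le_eq)
  moreover have "r * g x0 x0 = h x0 x0"
    unfolding r_def using gx0 by simp
  ultimately show False
    using t unfolding gz hz by (simp add: algebra_simps)
qed

lemma simultaneous_orthonormal_basis_set:
  fixes h :: "'a \<Rightarrow> 'a \<Rightarrow> real"
  assumes h: "bilinear h" "\<And>x y. h x y = h y x"
  shows "subspace V \<Longrightarrow> \<forall>v\<in>V. v \<noteq> 0 \<longrightarrow> g v v > 0 \<Longrightarrow>
    \<exists>D. D \<subseteq> V \<and> signed_orthonormal D \<and> (\<forall>c\<in>D. g c c = 1) \<and> span D = V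
      \<and> (\<forall>a\<in>D. \<forall>b\<in>D. a \<noteq> b \<longrightarrow> h a b = 0)"
proof (induction "dim V" arbitrary: V rule: less_induct)
  case less
  note V = less.prems(1) and pos = less.prems(2)
  show ?case
  proof (cases "V = {0}")
    case True
    then show ?thesis
      by (intro exI[of _ "{}"]) (auto simp: signed_orthonormal_def)
  next
    case False
    obtain x0 where x0: "x0 \<in> V" "x0 \<noteq> 0"
        "\<forall>z\<in>V. z \<noteq> 0 \<longrightarrow> h z z / g z z \<le> h x0 x0 / g x0 x0"
      using rayleigh_quotient_maximum[OF h(1) V False pos] by blast
    define u where "u = (1 / sqrt \<bar>g x0 x0\<bar>) *\<^sub>R x0"
    have uu: "g u u = 1"
      using scaled_self_sgn[of x0] pos x0 unfolding u_def by simp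
    have uV: "u \<in> V"
      unfolding u_def using x0 V by (simp add: subspace_scale)
    have u_orth: "g u y = 0 \<longleftrightarrow> g x0 y = 0" "h u y = 0 \<longleftrightarrow> h x0 y = 0" for y
      using pos x0 h(1) unfolding u_def by (auto simp: form_simps bilinear_scale_left)
    let ?V0 = "{y\<in>V. g u y = 0}"
    have "\<forall>v\<in>?V0. v \<noteq> 0 \<longrightarrow> g v v > 0"
      using pos by auto
    then obtain D0 where D0: "D0 \<subseteq> ?V0" "signed_orthonormal D0" "\<forall>c\<in>D0. g c c = 1"
        "span D0 = ?V0" "\<forall>a\<in>D0. \<forall>b\<in>D0. a \<noteq> b \<longrightarrow> h a b = 0"
      using less.hyps[OF dim_orthogonal_in_less[OF V uV] subspace_orthogonal_in[OF V]] uu by auto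
    have orth: "g u d = 0 \<and> g d u = 0 \<and> h u d = 0 \<and> h d u = 0" if "d \<in> D0" for d
    proof -
      have "d \<in> V" "g u d = 0"
        using that D0(1) by auto
      moreover have "h x0 d = 0"
        using rayleigh_maximizer_orthogonal[OF h V pos x0 \<open>d \<in> V\<close>] u_orth(1) \<open>g u d = 0\<close>
        by blast
      ultimately show ?thesis
        using symmetric[of d u] h(2)[of d u] u_orth(2) by auto
    qed
    have "u \<notin> D0"
    proof
      assume "u \<in> D0"
      then show False
        using orth[of u] uu by simp
    qed
    show ?thesis
    proof (intro exI[of _ "insert u D0"] conjI)
      show "insert u D0 \<subseteq> V"
        using uV D0(1) by auto
      show "signed_orthonormal (insert u D0)"
        unfolding signed_orthonormal_def
      proof (intro conjI ballI impI)
        show "finite (insert u D0)"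
          using D0(2) unfolding signed_orthonormal_def by simp
      next
        fix a b assume "a \<in> insert u D0" "b \<in> insert u D0" "a \<noteq> b"
        then show "g a b = 0"
          using orth D0(2) unfolding signed_orthonormal_def by auto
      next
        fix a assume "a \<in> insert u D0"
        then show "g a a = 1 \<or> g a a = -1"
          using uu D0(3) by auto
      qed
      show "\<forall>c\<in>insert u D0. g c c = 1"
        using D0(3) uu by auto
      show "span (insert u D0) = V"
        using span_insert_orthogonal_in[OF V uV _ D0(4)] uu by simp
      show "\<forall>a\<in>insert u D0. \<forall>b\<in>insert u D0. a \<noteq> b \<longrightarrow> h a b = 0"
        using D0(5) orth by blast
    qed
  qed
qed

lemma simultaneous_orthonormal_basis:
  fixes h :: "'a \<Rightarrow> 'a \<Rightarrow> real"
  assumes h: "bilinear h" "\<And>x y. h x y = h y x"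
    and V: "subspace V" "\<forall>v\<in>V. v \<noteq> 0 \<longrightarrow> g v v > 0" "dim V = m"
  shows "\<exists>eta. orthonormal_basis g V m eta \<and> (\<forall>i<m. \<forall>j<m. i \<noteq> j \<longrightarrow> h (eta i) (eta j) = 0)"
proof -
  obtain D where D: "D \<subseteq> V" "signed_orthonormal D" "\<forall>c\<in>D. g c c = 1" "span D = V"
      "\<forall>a\<in>D. \<forall>b\<in>D. a \<noteq> b \<longrightarrow> h a b = 0"
    using simultaneous_orthonormal_basis_set[OF h V(1,2)] by blast
  then obtain eta where eta: "orthonormal_basis g V m eta" "eta ` {..<m} = D" "inj_on eta {..<m}"
    using orthonormal_basis_of_set[OF D(1-4) V(3)] by blast
  then show ?thesis
    using D(5) by (intro exI[of _ eta]) (auto dest: inj_onD)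
qed

lemma eigen_mult_gram:
  assumes "linear P" "orthonormal_basis g V m xi" "orthonormal_basis g V m eta"
    and diag: "\<forall>i<m. \<forall>j<m. i \<noteq> j \<longrightarrow> g (P (eta i)) (P (eta j)) = 0"
  shows "eigen_mult (gram g m (\<lambda>i. P (xi i))) c = card {i. i < m \<and> g (P (eta i)) (P (eta i)) = c}"
proof -
  have "eigen_mult (gram g m (\<lambda>i. P (xi i))) c = eigen_mult (gram g m (\<lambda>i. P (eta i))) c"
    unfolding eigen_mult_def using char_poly_gram_eq[OF assms(1-3)] by simp
  also have "gram g m (\<lambda>i. P (eta i))
      = mat m m (\<lambda>(i, j). if i = j then g (P (eta i)) (P (eta i)) else 0)"
    unfolding gram_def using diag by (intro eq_matI) auto
  finally show ?thesis
    by (simp only: eigen_mult_diagonal)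
qed

lemma matched_diagonalizing_bases:
  assumes P: "linear P"
    and V: "subspace V" "\<forall>v\<in>V. v \<noteq> 0 \<longrightarrow> g v v > 0" "dim V = m"
    and V': "subspace V'" "\<forall>v\<in>V'. v \<noteq> 0 \<longrightarrow> g v v > 0" "dim V' = m"
    and xi: "orthonormal_basis g V m xi" and xi': "orthonormal_basis g V' m xi'"
    and eig: "same_eigenvalues (gram g m (\<lambda>i. P (xi i))) (gram g m (\<lambda>i. P (xi' i)))"
  shows "\<exists>eta eta' d. orthonormal_basis g V m eta \<and> orthonormal_basis g V' m eta'
    \<and> (\<forall>i<m. \<forall>j<m. g (P (eta i)) (P (eta j)) = (if i = j then d i else 0)
                  \<and> g (P (eta' i)) (P (eta' j)) = (if i = j then d i else 0))"
proof -
  define h where "h x y = g (P x) (P y)" for x y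
  have h: "bilinear h" "h x y = h y x" for x y
    unfolding h_def by (simp_all add: bilinear_compose_linear[OF bilinear P P] symmetric)
  obtain eta where eta: "orthonormal_basis g V m eta" "\<forall>i<m. \<forall>j<m. i \<noteq> j \<longrightarrow> h (eta i) (eta j) = 0"
    using simultaneous_orthonormal_basis[OF h V] by blast
  obtain eta0 where eta0: "orthonormal_basis g V' m eta0"
      "\<forall>i<m. \<forall>j<m. i \<noteq> j \<longrightarrow> h (eta0 i) (eta0 j) = 0"
    using simultaneous_orthonormal_basis[OF h V'] by blast
  define d where "d i = h (eta i) (eta i)" for i
  define d0 where "d0 i = h (eta0 i) (eta0 i)" for i
  have "card {i\<in>{..<m}. d i = c} = card {i\<in>{..<m}. d0 i = c}" for c
    using eig eigen_mult_gram[OF P xi eta(1)] eigen_mult_gram[OF P xi' eta0(1)] eta(2) eta0(2)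
    unfolding same_eigenvalues_def d_def d0_def h_def by simp
  then obtain \<sigma> where \<sigma>: "bij_betw \<sigma> {..<m} {..<m}" "\<forall>i\<in>{..<m}. d0 (\<sigma> i) = d i"
    using bij_betw_preserving_fibres[of "{..<m}" "{..<m}" d d0] by blast
  define eta' where "eta' i = eta0 (\<sigma> i)" for i
  have "h (eta' i) (eta' j) = (if i = j then d i else 0)" if "i < m" "j < m" for i j
  proof (cases "i = j")
    case False
    then have "\<sigma> i \<noteq> \<sigma> j"
      using \<sigma>(1) that by (auto dest: bij_betw_imp_inj_on inj_onD)
    then show ?thesis
      using eta0(2) bij_betwE[OF \<sigma>(1)] that False unfolding eta'_def by auto
  qed (use \<sigma>(2) that in \<open>auto simp: eta'_def d0_def\<close>)
  moreover have "orthonormal_basis g V' m eta'"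
    unfolding eta'_def by (rule orthonormal_basis_permute[OF eta0(1) \<sigma>(1)])
  moreover have "h (eta i) (eta j) = (if i = j then d i else 0)" if "i < m" "j < m" for i j
    using eta(2) that unfolding d_def by auto
  ultimately have "orthonormal_basis g V m eta \<and> orthonormal_basis g V' m eta'
    \<and> (\<forall>i<m. \<forall>j<m. g (P (eta i)) (P (eta j)) = (if i = j then d i else 0)
                  \<and> g (P (eta' i)) (P (eta' j)) = (if i = j then d i else 0))"
    using eta(1) unfolding h_def by blast
  then show ?thesis
    by blast
qed

end

section \<open>Lorentzian forms\<close>

locale lorentzian_form =
  fixes g :: "'a::euclidean_space \<Rightarrow> 'a \<Rightarrow> real"
  assumes lorentzian: "lorentzian g"

sublocale lorentzian_form \<subseteq> sym_bilinear_form
  using lorentzian unfolding lorentzian_def by unfold_locales auto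

context lorentzian_form
begin

lemma card_negative_le_1:
  assumes "signed_orthonormal D"
  shows "card {c\<in>D. g c c = -1} \<le> 1"
proof -
  let ?N = "{c\<in>D. g c c = -1}"
  have N: "signed_orthonormal ?N"
    using signed_orthonormal_subset[OF assms] by auto
  have "g x x < 0" if x: "x \<in> span ?N" "x \<noteq> 0" for x
  proof -
    have "\<exists>c\<in>?N. g x c \<noteq> 0"
    proof (rule ccontr)
      assume "\<not> ?thesis"
      then have "x = 0"
        using signed_orthonormal_expansion[OF N x(1)] by simp
      then show False
        using x(2) by simp
    qed
    then obtain c where c: "c \<in> ?N" "g x c \<noteq> 0"
      by blast
    have "finite ?N"
      using N unfolding signed_orthonormal_def by simp
    then have "(g x c)\<^sup>2 \<le> (\<Sum>d\<in>?N. (g x d)\<^sup>2)"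
      using c(1) by (intro member_le_sum) auto
    moreover have "g x x = - (\<Sum>d\<in>?N. (g x d)\<^sup>2)"
      using signed_orthonormal_quadratic[OF N x(1)] by (simp add: sum_negf)
    ultimately show ?thesis
      using c(2) by (smt (verit) zero_less_power2)
  qed
  then have "dim (span ?N) \<le> 1"
    using lorentzian unfolding lorentzian_def by (meson subspace_span)
  then show ?thesis
    using dim_span_eq_card_independent[OF signed_orthonormal_independent[OF N]] by simp
qed

lemma no_orthogonal_timelike_pair:
  assumes "g e e < 0" "g x x < 0"
  shows "g e x \<noteq> 0"
proof
  assume ex: "g e x = 0"
  define u where "u = (1 / sqrt \<bar>g e e\<bar>) *\<^sub>R e"
  define v where "v = (1 / sqrt \<bar>g x x\<bar>) *\<^sub>R x"
  have uv: "g u u = -1" "g v v = -1" "g u v = 0" "g v u = 0"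
    using scaled_self_sgn[of e] scaled_self_sgn[of x] assms ex symmetric[of x e]
    unfolding u_def v_def by (simp_all add: form_simps)
  then have "u \<noteq> v"
    by auto
  then have "signed_orthonormal {u, v}"
    using uv unfolding signed_orthonormal_def by auto
  moreover have "{c\<in>{u, v}. g c c = -1} = {u, v}"
    using uv by auto
  then have "card {c\<in>{u, v}. g c c = -1} = 2"
    using \<open>u \<noteq> v\<close> by simp
  ultimately show False
    using card_negative_le_1[of "{u, v}"] by simp
qed

lemma spacelike_of_orthogonal_timelike:
  assumes e: "g e e < 0" and "g e x = 0" "x \<noteq> 0"
  shows "g x x > 0"
proof (rule ccontr)
  assume "\<not> g x x > 0"
  moreover have "\<not> g x x < 0"
    using no_orthogonal_timelike_pair[OF e] assms(2) by blast
  ultimately have xx: "g x x = 0"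
    by simp
  obtain y where y: "g x y \<noteq> 0"
    using lorentzian assms(3) unfolding lorentzian_def by blast
  define w where "w = y - (g e y / g e e) *\<^sub>R e"
  have ew: "g e w = 0"
    unfolding w_def using e by (simp add: form_simps)
  have xw: "g x w = g x y"
    unfolding w_def using assms(2) symmetric[of x e] by (simp add: form_simps)
  obtain t where t: "2 * t * (- g x w) + t\<^sup>2 * (- g w w) > 0"
    using exists_quadratic_positive[of "- g x w" "- g w w"] xw y by auto
  have "g (x + t *\<^sub>R w) (x + t *\<^sub>R w) = 2 * t * g x w + t\<^sup>2 * g w w"
    using xx symmetric[of w x] by (simp add: form_simps power2_eq_square algebra_simps)
  then have "g (x + t *\<^sub>R w) (x + t *\<^sub>R w) < 0"
    using t by simp
  moreover have "g e (x + t *\<^sub>R w) = 0"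
    using assms(2) ew by (simp add: form_simps)
  ultimately show False
    using no_orthogonal_timelike_pair[OF e] by blast
qed

lemma orthogonal_null_vectors_parallel:
  assumes n: "g n1 n1 = 0" "g n2 n2 = 0" "g n1 n2 = 0" and "n1 \<noteq> 0"
  shows "n2 \<in> span {n1}"
proof -
  obtain e where e: "g e e < 0"
    using lorentzian unfolding lorentzian_def by blast
  have "g n1 e \<noteq> 0"
    using spacelike_of_orthogonal_timelike[OF e _ \<open>n1 \<noteq> 0\<close>] n(1) symmetric[of n1 e] by auto
  define x where "x = g n2 e *\<^sub>R n1 - g n1 e *\<^sub>R n2"
  have "g e x = 0"
    unfolding x_def using symmetric[of e] by (simp add: form_simps)
  moreover have "g x x = 0"
    unfolding x_def using n symmetric[of n2 n1] by (simp add: form_simps)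
  ultimately have "x = 0"
    using spacelike_of_orthogonal_timelike[OF e] by fastforce
  then have eq: "g n1 e *\<^sub>R n2 = g n2 e *\<^sub>R n1"
    unfolding x_def by simp
  have "n2 = (1 / g n1 e) *\<^sub>R (g n1 e *\<^sub>R n2)"
    using \<open>g n1 e \<noteq> 0\<close> by simp
  also have "\<dots> = (1 / g n1 e) *\<^sub>R (g n2 e *\<^sub>R n1)"
    unfolding eq ..
  finally have n2: "n2 = (1 / g n1 e) *\<^sub>R (g n2 e *\<^sub>R n1)" .
  show ?thesis
    by (subst n2) (intro span_scale span_base singletonI)
qed

lemma degenerate_orthogonal_family_structure:
  fixes a :: "nat \<Rightarrow> 'a"
  assumes ga: "\<forall>i<m. \<forall>j<m. g (a i) (a j) = (if i = j then lam i else 0)"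
    and deg: "degenerate_subspace g (span (a ` {..<m}))"
    and dim: "dim (span (a ` {..<m})) = m"
  shows "\<exists>i0<m. lam i0 = 0 \<and> a i0 \<noteq> 0 \<and> (\<forall>j<m. j \<noteq> i0 \<longrightarrow> lam j \<noteq> 0)"
proof -
  note indep = independent_of_dim_span[OF dim]
  have "\<exists>i0<m. lam i0 = 0"
  proof (rule ccontr)
    assume none: "\<not> (\<exists>i0<m. lam i0 = 0)"
    obtain x where x: "x \<in> span (a ` {..<m})" "x \<noteq> 0" "\<forall>y\<in>span (a ` {..<m}). g x y = 0"
      using deg unfolding degenerate_subspace_def by blast
    obtain u where "x = (\<Sum>v\<in>a ` {..<m}. u v *\<^sub>R v)"
      using x(1) span_finite[of "a ` {..<m}"] by auto
    also have "\<dots> = (\<Sum>j<m. u (a j) *\<^sub>R a j)"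
      by (rule sum.reindex_cong[OF indep(1)]) auto
    finally have x_sum: "x = (\<Sum>j<m. u (a j) *\<^sub>R a j)" .
    have "u (a i) = 0" if "i < m" for i
    proof -
      have "a i \<in> span (a ` {..<m})"
        using that by (intro span_base) auto
      then have "g x (a i) = 0"
        using x(3) by blast
      moreover have "g x (a i) = u (a i) * lam i"
        unfolding x_sum using orthogonal_family_coeff[where I="{..<m}" and a=a and lam=lam and k="\<lambda>j. u (a j)" and i=i]
          ga that
        by simp
      ultimately show ?thesis
        using none that by auto
    qed
    then show False
      using x(2) unfolding x_sum by simp
  qed
  then obtain i0 where i0: "i0 < m" "lam i0 = 0"
    by blast
  have "a i0 \<noteq> 0"
  proof
    assume "a i0 = 0"
    then have "0 \<in> a ` {..<m}"
      using i0(1) by (metis image_eqI lessThan_iff)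
    then show False
      using dependent_zero[of "a ` {..<m}"] indep(2) by simp
  qed
  moreover have "lam j \<noteq> 0" if j: "j < m" "j \<noteq> i0" for j
  proof
    assume "lam j = 0"
    have "g (a i0) (a i0) = 0" "g (a j) (a j) = 0" "g (a i0) (a j) = 0"
      using ga[rule_format, OF i0(1) i0(1)] ga[rule_format, OF j(1) j(1)]
        ga[rule_format, OF i0(1) j(1)] i0(2) \<open>lam j = 0\<close> j(2) by simp_all
    then have "a j \<in> span {a i0}"
      using orthogonal_null_vectors_parallel \<open>a i0 \<noteq> 0\<close> by blast
    moreover have "a i0 \<noteq> a j"
      using inj_onD[OF indep(1)] i0(1) j by auto
    then have "span {a i0} \<subseteq> span (a ` {..<m} - {a j})"
      using i0(1) by (intro span_mono) auto
    ultimately have "a j \<in> span (a ` {..<m} - {a j})"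
      by blast
    then show False
      using indep(2) j(1) unfolding dependent_def by blast
  qed
  ultimately show ?thesis
    using i0 by blast
qed

end

section \<open>Orthogonal splittings\<close>

locale orthogonal_splitting = sym_bilinear_form +
  fixes W1 W2 :: "'a set"
  assumes splitting: "orth_direct_sum g W1 W2"
begin


lemma subspace_W1: "subspace W1"
  and subspace_W2: "subspace W2"
  and orthogonal_W1_W2: "a \<in> W1 \<Longrightarrow> b \<in> W2 \<Longrightarrow> g a b = 0"
  using splitting unfolding orth_direct_sum_def by auto

lemma decomposition_unique:
  assumes "a \<in> W1" "b \<in> W2" "a' \<in> W1" "b' \<in> W2" "a + b = a' + b'"
  shows "a = a'"
proof -
  have "a - a' = b' - b"
    using assms(5) by (simp add: algebra_simps)
  moreover have "a - a' \<in> W1" "b' - b \<in> W2"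
    using assms subspace_W1 subspace_W2 by (simp_all add: subspace_diff)
  ultimately have "a - a' \<in> W1 \<inter> W2"
    by simp
  then show ?thesis
    using splitting unfolding orth_direct_sum_def by simp
qed

lemma proj_add:
  assumes "a \<in> W1" "b \<in> W2"
  shows "proj1 W1 W2 (a + b) = a" "proj2 W1 W2 (a + b) = b"
proof -
  show "proj1 W1 W2 (a + b) = a"
    unfolding proj1_def
  proof (rule the_equality)
    fix a' assume "a' \<in> W1 \<and> a + b - a' \<in> W2"
    then show "a' = a"
      using decomposition_unique[of a' "a + b - a'" a b] assms by simp
  qed (use assms in simp)
  show "proj2 W1 W2 (a + b) = b"
    unfolding proj2_def
  proof (rule the_equality)
    fix b' assume b': "b' \<in> W2 \<and> a + b - b' \<in> W1"
    then have "a + b - b' = a"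
      using decomposition_unique[of "a + b - b'" b' a b] assms by simp
    then show "b' = b"
      by (simp add: algebra_simps)
  qed (use assms in simp)
qed

lemma proj_decomposition:
  "proj1 W1 W2 u \<in> W1" "proj2 W1 W2 u \<in> W2" "proj1 W1 W2 u + proj2 W1 W2 u = u"
proof -
  obtain a b where "a \<in> W1" "b \<in> W2" "u = a + b"
    using splitting unfolding orth_direct_sum_def by blast
  then show "proj1 W1 W2 u \<in> W1" "proj2 W1 W2 u \<in> W2" "proj1 W1 W2 u + proj2 W1 W2 u = u"
    using proj_add by auto
qed

lemma proj_W1: "a \<in> W1 \<Longrightarrow> proj1 W1 W2 a = a \<and> proj2 W1 W2 a = 0"
  using proj_add[of a 0] subspace_0[OF subspace_W2] by simp

lemma proj_W2: "b \<in> W2 \<Longrightarrow> proj1 W1 W2 b = 0 \<and> proj2 W1 W2 b = b"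
  using proj_add[of 0 b] subspace_0[OF subspace_W1] by simp

lemma linear_proj: "linear (proj1 W1 W2)" "linear (proj2 W1 W2)"
proof -
  let ?p1 = "proj1 W1 W2" and ?p2 = "proj2 W1 W2"
  note d = proj_decomposition
  have add: "x + y = (?p1 x + ?p1 y) + (?p2 x + ?p2 y)" for x y
    using d(3)[of x] d(3)[of y] by (simp add: algebra_simps)
  have scale: "c *\<^sub>R x = c *\<^sub>R ?p1 x + c *\<^sub>R ?p2 x" for c x
    using d(3)[of x] by (metis scaleR_right_distrib)
  have "?p1 (x + y) = ?p1 x + ?p1 y \<and> ?p2 (x + y) = ?p2 x + ?p2 y" for x y
    using proj_add[of "?p1 x + ?p1 y" "?p2 x + ?p2 y"] add[of x y] d subspace_W1 subspace_W2
    by (simp add: subspace_add)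
  moreover have "?p1 (c *\<^sub>R x) = c *\<^sub>R ?p1 x \<and> ?p2 (c *\<^sub>R x) = c *\<^sub>R ?p2 x" for c x
    using proj_add[of "c *\<^sub>R ?p1 x" "c *\<^sub>R ?p2 x"] scale[of c x] d subspace_W1 subspace_W2
    by (simp add: subspace_scale)
  ultimately show "linear ?p1" "linear ?p2"
    by (auto intro: linearI)
qed

lemma form_split: "g x y = g (proj1 W1 W2 x) (proj1 W1 W2 y) + g (proj2 W1 W2 x) (proj2 W1 W2 y)"
proof -
  note d = proj_decomposition
  have "g (proj1 W1 W2 x) (proj2 W1 W2 y) = 0" "g (proj2 W1 W2 x) (proj1 W1 W2 y) = 0"
    using orthogonal_W1_W2 d symmetric by metis+
  moreover have "g x y = g (proj1 W1 W2 x + proj2 W1 W2 x) (proj1 W1 W2 y + proj2 W1 W2 y)"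
    using d(3) by simp
  ultimately show ?thesis
    by (simp add: form_simps)
qed

lemma adapted_isometry_commutes_proj:
  assumes "adapted_isometry g W1 W2 T"
  shows "proj1 W1 W2 (T x) = T (proj1 W1 W2 x)" "proj2 W1 W2 (T x) = T (proj2 W1 W2 x)"
proof -
  have "linear T" "T ` W1 = W1" "T ` W2 = W2"
    using assms unfolding adapted_isometry_def by auto
  moreover have "T x = T (proj1 W1 W2 x) + T (proj2 W1 W2 x)"
    using proj_decomposition(3)[of x] linear_add[OF \<open>linear T\<close>] by metis
  ultimately show "proj1 W1 W2 (T x) = T (proj1 W1 W2 x)" "proj2 W1 W2 (T x) = T (proj2 W1 W2 x)"
    using proj_add proj_decomposition(1,2) by (metis imageI)+
qed

lemma nondegenerate_components:
  assumes "\<forall>x. (\<forall>y. g x y = 0) \<longrightarrow> x = 0"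
  shows "\<not> degenerate_subspace g W1" "\<not> degenerate_subspace g W2"
proof -
  have "x = 0" if "x \<in> W1" "\<forall>y\<in>W1. g x y = 0" for x
  proof -
    have "g x y = 0" for y
      using form_split[of x y] proj_W1[OF that(1)] that(2) proj_decomposition(1) by (simp add: form_simps)
    then show ?thesis
      using assms by blast
  qed
  moreover have "x = 0" if "x \<in> W2" "\<forall>y\<in>W2. g x y = 0" for x
  proof -
    have "g x y = 0" for y
      using form_split[of x y] proj_W2[OF that(1)] that(2) proj_decomposition(2) by (simp add: form_simps)
    then show ?thesis
      using assms by blast
  qed
  ultimately show "\<not> degenerate_subspace g W1" "\<not> degenerate_subspace g W2"
    unfolding degenerate_subspace_def by blast+
qed

lemma adapted_isometry_of_components:
  assumes T1: "isometry_on W1 T1" and T2: "isometry_on W2 T2"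
  shows "adapted_isometry g W1 W2 (\<lambda>x. T1 (proj1 W1 W2 x) + T2 (proj2 W1 W2 x))"
proof -
  let ?T = "\<lambda>x. T1 (proj1 W1 W2 x) + T2 (proj2 W1 W2 x)"
  note d = proj_decomposition
  have lin: "linear T1" "linear T2"
    using T1 T2 unfolding isometry_on_def by auto
  have in_W: "T1 (proj1 W1 W2 x) \<in> W1" "T2 (proj2 W1 W2 x) \<in> W2" for x
    using T1 T2 d(1,2) unfolding isometry_on_def by blast+
  have "linear ?T"
    using linear_compose[OF linear_proj(1) lin(1)] linear_compose[OF linear_proj(2) lin(2)]
    by (auto simp: o_def intro: linear_compose_add)
  moreover have "g (?T x) (?T y) = g x y" for x y
    using form_split[of "?T x" "?T y"] form_split[of x y] proj_add in_W T1 T2 d(1,2)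
    unfolding isometry_on_def by simp
  moreover have "?T ` W1 = W1"
    using T1 proj_W1 linear_0[OF lin(2)] unfolding isometry_on_def by (simp cong: image_cong)
  moreover have "?T ` W2 = W2"
    using T2 proj_W2 linear_0[OF lin(1)] unfolding isometry_on_def by (simp cong: image_cong)
  ultimately show ?thesis
    unfolding adapted_isometry_def by blast
qed

lemma same_eigenvalues_of_adapted_isometry:
  assumes T: "adapted_isometry g W1 W2 T" "T ` V = V'"
    and xi: "orthonormal_basis g V m xi" and xi': "orthonormal_basis g V' m xi'"
  shows "same_eigenvalues (gram g m (\<lambda>i. proj1 W1 W2 (xi i))) (gram g m (\<lambda>i. proj1 W1 W2 (xi' i)))
    \<and> same_eigenvalues (gram g m (\<lambda>i. proj2 W1 W2 (xi i))) (gram g m (\<lambda>i. proj2 W1 W2 (xi' i)))"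
  using same_eigenvalues_gram_of_isometry[OF linear_proj(1) _ _ T(2) _ xi xi']
    same_eigenvalues_gram_of_isometry[OF linear_proj(2) _ _ T(2) _ xi xi']
    adapted_isometry_commutes_proj[OF T(1)] T(1) unfolding adapted_isometry_def by blast

end

locale lorentzian_splitting = lorentzian_form g + orthogonal_splitting g W1 W2
  for g :: "'a::euclidean_space \<Rightarrow> 'a \<Rightarrow> real" and W1 W2 +
  assumes timelike_W1: "timelike_subspace g W1"
begin


lemma nondegenerate_W1: "\<not> degenerate_subspace g W1"
  and nondegenerate_W2: "\<not> degenerate_subspace g W2"
  using nondegenerate_components lorentzian unfolding lorentzian_def by blast+

lemma spacelike_W2:
  assumes "b \<in> W2" "b \<noteq> 0"
  shows "g b b > 0"
proof -
  obtain e where "e \<in> W1" "g e e < 0"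
    using timelike_W1 unfolding timelike_subspace_def by blast
  then show ?thesis
    using spacelike_of_orthogonal_timelike orthogonal_W1_W2 assms by blast
qed

lemma has_index_W1: "has_index W1 1"
  unfolding has_index_def
proof (intro allI impI)
  fix B assume B: "B \<subseteq> W1 \<and> signed_orthonormal B \<and> span B = W1"
  obtain e where e: "e \<in> W1" "g e e < 0"
    using timelike_W1 unfolding timelike_subspace_def by blast
  have "{b\<in>B. g b b = -1} \<noteq> {}"
  proof
    assume "{b\<in>B. g b b = -1} = {}"
    then have "\<forall>c\<in>B. g c c = 1"
      using B unfolding signed_orthonormal_def by auto
    then have "0 \<le> (\<Sum>c\<in>B. g c c * (g e c)\<^sup>2)"
      by (simp add: sum_nonneg)
    then show False
      using signed_orthonormal_quadratic[of B e] B e by simp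
  qed
  moreover have "finite {b\<in>B. g b b = -1}"
    using B unfolding signed_orthonormal_def by simp
  ultimately show "card {b\<in>B. g b b = -1} = 1"
    using card_negative_le_1[of B] B by (simp add: le_antisym Suc_leI card_gt_0_iff)
qed

lemma has_index_W2: "has_index W2 0"
  unfolding has_index_def
proof (intro allI impI)
  fix B assume B: "B \<subseteq> W2 \<and> signed_orthonormal B \<and> span B = W2"
  have "g b b \<noteq> -1" if "b \<in> B" for b
  proof (cases "b = 0")
    case False
    then show ?thesis
      using spacelike_W2 B that by fastforce
  qed (simp add: form_simps)
  then have "{b\<in>B. g b b = -1} = {}"
    by blast
  then show "card {b\<in>B. g b b = -1} = 0"
    by (simp only: card.empty)
qed

lemma isometry_W1_of_orthogonal_families:
  fixes a a' :: "nat \<Rightarrow> 'a"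
  assumes aW: "\<forall>i<m. a i \<in> W1 \<and> a' i \<in> W1"
    and ga: "\<forall>i<m. \<forall>j<m. g (a i) (a j) = (if i = j then lam i else 0)"
    and ga': "\<forall>i<m. \<forall>j<m. g (a' i) (a' j) = (if i = j then lam i else 0)"
    and cond: "(degenerate_subspace g (span (a ` {..<m})) \<and> dim (span (a ` {..<m})) = m
        \<and> degenerate_subspace g (span (a' ` {..<m})) \<and> dim (span (a' ` {..<m})) = m)
      \<or> (\<not> degenerate_subspace g (span (a ` {..<m})) \<and> \<not> degenerate_subspace g (span (a' ` {..<m})))"
  shows "\<exists>T. isometry_on W1 T \<and> (\<forall>i<m. T (a i) = a' i)"
  using cond
proof (elim disjE conjE)
  assume "degenerate_subspace g (span (a ` {..<m}))" "dim (span (a ` {..<m})) = m"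
    "degenerate_subspace g (span (a' ` {..<m}))" "dim (span (a' ` {..<m})) = m"
  then obtain i0 i1 where i0: "i0 < m" "lam i0 = 0" "a i0 \<noteq> 0" "\<forall>j<m. j \<noteq> i0 \<longrightarrow> lam j \<noteq> 0"
      and i1: "i1 < m" "lam i1 = 0" "a' i1 \<noteq> 0"
    using degenerate_orthogonal_family_structure[OF ga] degenerate_orthogonal_family_structure[OF ga']
    by blast
  then have "a' i0 \<noteq> 0"
    by blast
  then show ?thesis
    by (rule isometry_extension_one_null[OF subspace_W1 nondegenerate_W1 has_index_W1 aW ga ga'
          i0(1-3) _ i0(4)])
next
  assume "\<not> degenerate_subspace g (span (a ` {..<m}))" "\<not> degenerate_subspace g (span (a' ` {..<m}))"
  then show ?thesis
    by (rule isometry_extension_nondegenerate_span[OF subspace_W1 nondegenerate_W1 has_index_W1 aW ga ga'])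
qed

lemma isometry_W2_of_orthogonal_families:
  fixes b b' :: "nat \<Rightarrow> 'a"
  assumes bW: "\<forall>i<m. b i \<in> W2 \<and> b' i \<in> W2"
    and gb: "\<forall>i<m. \<forall>j<m. g (b i) (b j) = (if i = j then mu i else 0)"
    and gb': "\<forall>i<m. \<forall>j<m. g (b' i) (b' j) = (if i = j then mu i else 0)"
  shows "\<exists>T. isometry_on W2 T \<and> (\<forall>i<m. T (b i) = b' i)"
proof -
  have "\<not> degenerate_subspace g (span (c ` {..<m}))" if "\<forall>i<m. c i \<in> W2" for c
  proof -
    have "span (c ` {..<m}) \<subseteq> W2"
      by (rule span_minimal) (use that subspace_W2 in auto)
    then show ?thesis
      using spacelike_W2 unfolding degenerate_subspace_def by fastforce
  qed
  then show ?thesis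
    using isometry_extension_nondegenerate_span[OF subspace_W2 nondegenerate_W2 has_index_W2 bW gb gb'] bW
    by simp
qed

lemma isometry_of_matching_grams:
  assumes V: "spacelike_subspace g V" "dim V = m" and V': "spacelike_subspace g V'" "dim V' = m"
    and xi: "orthonormal_basis g V m xi" and xi': "orthonormal_basis g V' m xi'"
    and cond: "let S = span ((\<lambda>i. proj1 W1 W2 (xi i)) ` {..<m});
                   S' = span ((\<lambda>i. proj1 W1 W2 (xi' i)) ` {..<m})
               in (degenerate_subspace g S \<and> dim S = m \<and> degenerate_subspace g S' \<and> dim S' = m)
                  \<or> (\<not> degenerate_subspace g S \<and> \<not> degenerate_subspace g S')"
    and eig: "same_eigenvalues (gram g m (\<lambda>i. proj1 W1 W2 (xi i)))
                               (gram g m (\<lambda>i. proj1 W1 W2 (xi' i)))"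
  shows "\<exists>T. adapted_isometry g W1 W2 T \<and> T ` V = V'"
proof -
  let ?p1 = "proj1 W1 W2" and ?p2 = "proj2 W1 W2"
  obtain eta eta' d where eta: "orthonormal_basis g V m eta" "orthonormal_basis g V' m eta'"
    and diag: "\<forall>i<m. \<forall>j<m. g (?p1 (eta i)) (?p1 (eta j)) = (if i = j then d i else 0)
                            \<and> g (?p1 (eta' i)) (?p1 (eta' j)) = (if i = j then d i else 0)"
    using matched_diagonalizing_bases[OF linear_proj(1) _ _ V(2) _ _ V'(2) xi xi' eig] V V'
    unfolding spacelike_subspace_def by blast
  have diag2: "\<forall>i<m. \<forall>j<m. g (?p2 (e i)) (?p2 (e j)) = (if i = j then 1 - d i else 0)"
    if "orthonormal_basis g W m e" "\<forall>i<m. \<forall>j<m. g (?p1 (e i)) (?p1 (e j)) = (if i = j then d i else 0)"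
    for W e
  proof (intro allI impI)
    fix i j assume ij: "i < m" "j < m"
    then have "g (e i) (e j) = (if i = j then 1 else 0)"
      using that(1) unfolding orthonormal_basis_def by blast
    then show "g (?p2 (e i)) (?p2 (e j)) = (if i = j then 1 - d i else 0)"
      using form_split[of "e i" "e j"] that(2) ij by auto
  qed
  have "span ((\<lambda>i. ?p1 (xi i)) ` {..<m}) = span ((\<lambda>i. ?p1 (eta i)) ` {..<m})"
    "span ((\<lambda>i. ?p1 (xi' i)) ` {..<m}) = span ((\<lambda>i. ?p1 (eta' i)) ` {..<m})"
    using span_image_orthonormal_basis[OF _ linear_proj(1)] xi xi' eta by simp_all
  then have cond': "(degenerate_subspace g (span ((\<lambda>i. ?p1 (eta i)) ` {..<m}))
        \<and> dim (span ((\<lambda>i. ?p1 (eta i)) ` {..<m})) = m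
        \<and> degenerate_subspace g (span ((\<lambda>i. ?p1 (eta' i)) ` {..<m}))
        \<and> dim (span ((\<lambda>i. ?p1 (eta' i)) ` {..<m})) = m)
      \<or> (\<not> degenerate_subspace g (span ((\<lambda>i. ?p1 (eta i)) ` {..<m}))
        \<and> \<not> degenerate_subspace g (span ((\<lambda>i. ?p1 (eta' i)) ` {..<m})))"
    using cond unfolding Let_def by simp
  have diag1: "\<forall>i<m. \<forall>j<m. g (?p1 (eta i)) (?p1 (eta j)) = (if i = j then d i else 0)"
    "\<forall>i<m. \<forall>j<m. g (?p1 (eta' i)) (?p1 (eta' j)) = (if i = j then d i else 0)"
    using diag by simp_all
  have "\<forall>i<m. ?p1 (eta i) \<in> W1 \<and> ?p1 (eta' i) \<in> W1"
    using proj_decomposition(1) by simp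
  then obtain T1 where T1: "isometry_on W1 T1" "\<forall>i<m. T1 (?p1 (eta i)) = ?p1 (eta' i)"
    using isometry_W1_of_orthogonal_families[OF _ diag1 cond'] by blast
  have "\<forall>i<m. ?p2 (eta i) \<in> W2 \<and> ?p2 (eta' i) \<in> W2"
    using proj_decomposition(2) by simp
  then obtain T2 where T2: "isometry_on W2 T2" "\<forall>i<m. T2 (?p2 (eta i)) = ?p2 (eta' i)"
    using isometry_W2_of_orthogonal_families[OF _ diag2[OF eta(1) diag1(1)] diag2[OF eta(2) diag1(2)]]
    by blast
  let ?T = "\<lambda>x. T1 (?p1 x) + T2 (?p2 x)"
  have T: "adapted_isometry g W1 W2 ?T"
    by (rule adapted_isometry_of_components[OF T1(1) T2(1)])
  then have "linear ?T"
    unfolding adapted_isometry_def by blast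
  moreover have "\<forall>i<m. ?T (eta i) = eta' i"
    using T1(2) T2(2) proj_decomposition(3) by simp
  ultimately have "?T ` V = V'"
    by (rule image_eq_of_orthonormal_basis_map[OF _ eta])
  with T show ?thesis
    by (intro exI[of _ ?T] conjI)
qed

end

theorem proposition4p3:
  fixes g :: "'a::euclidean_space \<Rightarrow> 'a \<Rightarrow> real"
    and W1 W2 V V' :: "'a set" and m :: nat
  assumes "lorentzian g"
    and "orth_direct_sum g W1 W2"
    and "timelike_subspace g W1"
    and "spacelike_subspace g V" and "spacelike_subspace g V'"
    and "dim V = m" and "dim V' = m"
  shows "((\<exists>T. adapted_isometry g W1 W2 T \<and> T ` V = V') \<longrightarrow>
            (\<forall>xi xi'. orthonormal_basis g V m xi \<and> orthonormal_basis g V' m xi' \<longrightarrow>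
               same_eigenvalues (gram g m (\<lambda>i. proj1 W1 W2 (xi i)))
                                (gram g m (\<lambda>i. proj1 W1 W2 (xi' i)))
             \<and> same_eigenvalues (gram g m (\<lambda>i. proj2 W1 W2 (xi i)))
                                (gram g m (\<lambda>i. proj2 W1 W2 (xi' i)))))
       \<and> ((\<exists>xi xi'. orthonormal_basis g V m xi \<and> orthonormal_basis g V' m xi'
            \<and> (let S = span ((\<lambda>i. proj1 W1 W2 (xi i)) ` {..<m});
                   S' = span ((\<lambda>i. proj1 W1 W2 (xi' i)) ` {..<m})
               in (degenerate_subspace g S \<and> dim S = m \<and> degenerate_subspace g S' \<and> dim S' = m)
                  \<or> (\<not> degenerate_subspace g S \<and> \<not> degenerate_subspace g S'))
            \<and> same_eigenvalues (gram g m (\<lambda>i. proj1 W1 W2 (xi i)))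
                               (gram g m (\<lambda>i. proj1 W1 W2 (xi' i))))
          \<longrightarrow> (\<exists>T. adapted_isometry g W1 W2 T \<and> T ` V = V'))"
proof -
  interpret lorentzian_splitting g W1 W2
    using assms(1-3) unfolding lorentzian_def
    by unfold_locales (auto simp: lorentzian_def)
  show ?thesis
    using same_eigenvalues_of_adapted_isometry isometry_of_matching_grams[OF assms(4,6,5,7)]
    by blast
qed

end
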